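(* Let $n\ge1$ and $d\in\mathbb{N}$, and define $N$ by $N(n,d)=N+1$. Let $X\subset\mathbb{R}^n$ be a self-similar set with $\operatorname{Hdeg}(X)\ge d+1$. Then $\tau^d_{N,\mathbf{s}}(X)=\mathcal{P}_d^*$ for every $\mathbf{s}\in X$.
   Context: $N(n,d):=\binom{n+d}{d}$, the dimension of the space $\mathcal{P}_d$ of real polynomials in $n$ variables of degree $\le d$; $\mathcal{P}_d^*$ is its dual. For $A\subset\mathbb{R}^n$, $\operatorname{Hdeg}(A)$ is the minimum degree of a nonzero polynomial vanishing on $A$ ($\infty$ if none exists). A map $\varphi:\mathbb{R}^n\to\mathbb{R}^n$ is a contraction if $\|\varphi(\mathbf{x})-\varphi(\mathbf{y})\|\le K\|\mathbf{x}-\mathbf{y}\|$ for some $K\in(0,1)$. Given contractions $\varphi_1,\dots,\varphi_p$, there is a unique nonempty compact $S$ with $S=\bigcup_i\varphi_i(S)$ (the attractor). A similarity transformation is an affine map preserving the angle of every ordered triple of points (equivalently $\|\varphi(\mathbf{x})-\varphi(\mathbf{y})\|=\lambda\|\mathbf{x}-\mathbf{y}\|$ for some $\lambda>0$). A set is self-similar if it is the attractor of $p\ge2$ contractions that are all similarity transformations. For $\mathbf{a}\in\mathbb{R}^n$ and $|\mathbf{p}|\le d$, $\delta^{(\mathbf{p})}_{\mathbf{a}}\in\mathcal{P}_d^*$ is $f\mapsto(-1)^{|\mathbf{p}|}\partial^{|\mathbf{p}|}f/\partial\mathbf{x}^{\mathbf{p}}(\mathbf{a})$, $\delta_{\mathbf{a}}=\delta^{(\mathbf{0})}_{\mathbf{a}}$.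 A bundle over $X$ is a subset $E\subset X\times\mathcal{P}_d^*$ whose fibres $E_{\mathbf{a}}=\{\xi:(\mathbf{a},\xi)\in E\}$ are linear subspaces. Higher order paratangent bundle $\tau^d_N(X)$: put $E_0=\{(\mathbf{a},\lambda\delta_{\mathbf{a}}):\mathbf{a}\in X,\lambda\in\mathbb{R}\}$. Given $E_k$, let $\Delta E_k$ be the set of $(\mathbf{a}_0,\dots,\mathbf{a}_N,\xi_0+\dots+\xi_N)\in X^{N+1}\times\mathcal{P}_d^*$ with $\mathbf{a}_i\in X$, $\xi_i\in E_{k,\mathbf{a}_i}$ and $|\mathbf{a}_i-\mathbf{a}_0|^{d-|\alpha|}\,|\xi_i((\mathbf{x}-\mathbf{a}_i)^\alpha)|\le1$ for all multi-indices $|\alpha|\le d$, $0\le i\le N$. Let $E'_k$ be the set of $(\mathbf{a},\xi)\in X\times\mathcal{P}_d^*$ with $(\mathbf{a},\dots,\mathbf{a},\xi)$ in the closure of $\Delta E_k$, and $E_{k+1}$ the bundle whose fibre at $\mathbf{a}$ is the linear span of $E'_{k,\mathbf{a}}$. The increasing sequence $E_k$ stabilizes and $\tau^d_N(X):=E_{2\dim\mathcal{P}_d^*}$; $\tau^d_{N,\mathbf{a}}(X)$ is its fibre at $\mathbf{a}$. *)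

theory Defs
  imports "HOL-Analysis.Analysis"
begin

type_synonym 'n mindex = "'n \<Rightarrow> nat"

definition mdeg :: "('n::finite) mindex \<Rightarrow> nat" where
  "mdeg \<alpha> = (\<Sum>i\<in>UNIV. \<alpha> i)"

definition mindices :: "nat \<Rightarrow> ('n::finite) mindex set" where
  "mindices d = {\<alpha>. mdeg \<alpha> \<le> d}"

definition mono :: "real^'n::finite \<Rightarrow> 'n mindex \<Rightarrow> real" where
  "mono x \<alpha> = (\<Prod>i\<in>UNIV. (x $ i) ^ (\<alpha> i))"

definition Ndim :: "nat \<Rightarrow> nat \<Rightarrow> nat" where
  "Ndim n d = (n + d) choose d"

(* Polynomials: coefficient functions (coefficient of x^alpha) with finite support *)
definition is_poly :: "(('n::finite) mindex \<Rightarrow> real) \<Rightarrow> bool" where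
  "is_poly c \<longleftrightarrow> finite {\<alpha>. c \<alpha> \<noteq> 0}"

definition pdeg :: "(('n::finite) mindex \<Rightarrow> real) \<Rightarrow> nat" where
  "pdeg c = Max (insert 0 (mdeg ` {\<alpha>. c \<alpha> \<noteq> 0}))"

definition peval :: "(('n::finite) mindex \<Rightarrow> real) \<Rightarrow> real^'n \<Rightarrow> real" where
  "peval c x = (\<Sum>\<alpha>\<in>{\<alpha>. c \<alpha> \<noteq> 0}. c \<alpha> * mono x \<alpha>)"

(* Hdeg(A): minimal degree of a nonzero polynomial vanishing on A (infinity if none) *)
definition Hdeg :: "(real^'n::finite) set \<Rightarrow> enat" where
  "Hdeg A = (INF c \<in> {c. is_poly c \<and> c \<noteq> (\<lambda>_. 0) \<and> (\<forall>x\<in>A. peval c x = 0)}. enat (pdeg c))"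

(* The dual P_d^*: a functional xi is represented by its values xi(x^alpha) on the
   monomial basis of P_d; entries outside |alpha| <= d are 0. *)
definition dual_space :: "nat \<Rightarrow> (('n::finite) mindex \<Rightarrow> real) set" where
  "dual_space d = {\<xi>. \<forall>\<alpha>. \<alpha> \<notin> mindices d \<longrightarrow> \<xi> \<alpha> = 0}"

definition dapply :: "nat \<Rightarrow> (('n::finite) mindex \<Rightarrow> real) \<Rightarrow> ('n mindex \<Rightarrow> real) \<Rightarrow> real" where
  "dapply d \<xi> c = (\<Sum>\<alpha>\<in>mindices d. c \<alpha> * \<xi> \<alpha>)"

(* coefficients of (x - a)^alpha (binomial expansion) *)
definition shifted_mono :: "real^'n::finite \<Rightarrow> 'n mindex \<Rightarrow> ('n mindex \<Rightarrow> real)" where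
  "shifted_mono a \<alpha> = (\<lambda>\<beta>. if (\<forall>i. \<beta> i \<le> \<alpha> i)
       then (\<Prod>i\<in>UNIV. real (\<alpha> i choose \<beta> i) * (- (a $ i)) ^ (\<alpha> i - \<beta> i)) else 0)"

definition delta :: "nat \<Rightarrow> real^'n::finite \<Rightarrow> ('n mindex \<Rightarrow> real)" where
  "delta d a = (\<lambda>\<alpha>. if \<alpha> \<in> mindices d then mono a \<alpha> else 0)"

definition fspan :: "(('n::finite) mindex \<Rightarrow> real) set \<Rightarrow> ('n mindex \<Rightarrow> real) set" where
  "fspan S = {\<xi>. \<exists>F c. finite F \<and> F \<subseteq> S \<and> \<xi> = (\<lambda>\<alpha>. \<Sum>v\<in>F. c v * v \<alpha>)}"

definition fibre :: "('a \<times> 'b) set \<Rightarrow> 'a \<Rightarrow> 'b set" where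
  "fibre E a = {\<xi>. (a, \<xi>) \<in> E}"

(* Delta E: tuples (a_0..a_N) are encoded as functions nat => real^'n that are 0 for i > N *)
definition DeltaE :: "(real^'n::finite) set \<Rightarrow> nat \<Rightarrow> nat \<Rightarrow> ((real^'n) \<times> ('n mindex \<Rightarrow> real)) set
     \<Rightarrow> ((nat \<Rightarrow> (real^'n)) \<times> ('n mindex \<Rightarrow> real)) set" where
  "DeltaE X d N E = {(as, \<xi>) | as \<xi> \<xi>s.
      (\<forall>i\<le>N. as i \<in> X \<and> \<xi>s i \<in> fibre E (as i) \<and>
         (\<forall>\<alpha>\<in>mindices d. norm (as i - as 0) ^ (d - mdeg \<alpha>) * \<bar>dapply d (\<xi>s i) (shifted_mono (as i) \<alpha>)\<bar> \<le> 1)) \<and>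
      (\<forall>i>N. as i = 0) \<and>
      \<xi> = (\<lambda>\<alpha>. \<Sum>i\<le>N. \<xi>s i \<alpha>)}"

definition Eprime :: "(real^'n::finite) set \<Rightarrow> nat \<Rightarrow> nat \<Rightarrow> ((real^'n) \<times> ('n mindex \<Rightarrow> real)) set
     \<Rightarrow> ((real^'n) \<times> ('n mindex \<Rightarrow> real)) set" where
  "Eprime X d N E = {(a, \<xi>). a \<in> X \<and> ((\<lambda>i. if i \<le> N then a else 0), \<xi>) \<in> closure (DeltaE X d N E)}"

primrec Eseq :: "(real^'n::finite) set \<Rightarrow> nat \<Rightarrow> nat \<Rightarrow> nat \<Rightarrow> ((real^'n) \<times> ('n mindex \<Rightarrow> real)) set" where
  "Eseq X d N 0 = {(a, \<xi>). a \<in> X \<and> (\<exists>t::real. \<xi> = (\<lambda>\<alpha>. t * delta d a \<alpha>))}"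
| "Eseq X d N (Suc k) = {(a, \<xi>). a \<in> X \<and> \<xi> \<in> fspan (fibre (Eprime X d N (Eseq X d N k)) a)}"

(* tau^d_N(X) = E_{2 dim P_d^*} *)
definition paratangent :: "(real^'n::finite) set \<Rightarrow> nat \<Rightarrow> nat \<Rightarrow> ((real^'n) \<times> ('n mindex \<Rightarrow> real)) set" where
  "paratangent X d N = Eseq X d N (2 * Ndim CARD('n) d)"

definition similarity :: "(real^'n::finite \<Rightarrow> real^'n) \<Rightarrow> real \<Rightarrow> bool" where
  "similarity \<phi> r \<longleftrightarrow> r > 0 \<and> (\<forall>x y. dist (\<phi> x) (\<phi> y) = r * dist x y)"

definition self_similar :: "(real^'n::finite) set \<Rightarrow> bool" where
  "self_similar S \<longleftrightarrow> (\<exists>p::nat. \<exists>\<phi>::nat \<Rightarrow> real^'n \<Rightarrow> real^'n. p \<ge> 2 \<and>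
      (\<forall>i<p. \<exists>r. r < 1 \<and> similarity (\<phi> i) r) \<and>
      S \<noteq> {} \<and> compact S \<and> S = (\<Union>i<p. \<phi> i ` S))"

end

theory Submission
  imports Defs "HOL-Library.Function_Algebras"
begin

(*
  Fibres of every E_k lie in P_d^*, because point evaluations do and P_d^* is closed under
  limits and spans.  Conversely, E_1 is contained in every later E_k, so it suffices that the
  fibre of E'_0 at s annihilates no nonzero polynomial p; its span is then all of P_d^*.

  Self-similarity yields similarities of X into itself whose images contain s and whose ratios
  rho_k tend to 0.  Written as x |-> s + rho_k I_k x with isometries I_k, a subsequence of the
  I_k converges to an affine bijection J.  Since Hdeg X > d, point evaluations at J(X) span
  P_d^*, so a homogeneous functional w of degree m is a combination sum c_i delta_(J x_i) of at
  most N + 1 of them.  The functionals sum_i c_i rho_k^(-m) delta_(s + rho_k I_k x_i) lie in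
  Delta E_0 after scaling c, and converge to f |-> w(f(s + .)): the terms of degree < m cancel
  because w is homogeneous, those of degree > m vanish with rho_k.  Taking for w a nonzero
  homogeneous part of p(s + .) gives a functional in the fibre that does not annihilate p.
*)

section \<open>Multi-indices and monomials\<close>

lemma mindices_component_le: "\<alpha> \<in> mindices d \<Longrightarrow> \<alpha> i \<le> d"
  unfolding mindices_def mdeg_def
  by (auto intro: order_trans[OF member_le_sum[of i UNIV \<alpha>]])

lemma finite_mindices: "finite (mindices d :: ('n::finite) mindex set)"
proof (rule finite_subset)
  show "mindices d \<subseteq> PiE UNIV (\<lambda>_. {..d})"
    using mindices_component_le by (auto simp: PiE_UNIV_domain)
qed (intro finite_PiE; simp)

lemma mindices_mono: "i \<le> j \<Longrightarrow> mindices i \<subseteq> mindices j"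
  by (auto simp: mindices_def)

lemma mdeg_add: "mdeg (\<alpha> + \<beta>) = mdeg \<alpha> + mdeg (\<beta>::('n::finite) mindex)"
  by (simp add: mdeg_def sum.distrib)

lemma mdeg_eq_0_iff: "mdeg \<alpha> = 0 \<longleftrightarrow> \<alpha> = (\<lambda>_. 0)"
  by (auto simp: mdeg_def fun_eq_iff)

lemma mindices_0: "mindices 0 = {\<lambda>_. 0}"
  by (auto simp: mindices_def mdeg_eq_0_iff)

text \<open>Padding \<open>\<alpha>\<close> by \<open>d - mdeg \<alpha>\<close> maps the multi-indices of degree at most \<open>d\<close> injectively
  to the lists of length \<open>n + 1\<close> with sum \<open>d\<close>, which are counted by \<open>card_length_sum_list\<close>.\<close>

lemma card_mindices_le: "card (mindices d :: ('n::finite) mindex set) \<le> Ndim CARD('n) d"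
proof -
  obtain es :: "'n list" where es: "distinct es" "set es = UNIV"
    using finite_distinct_list[OF finite_class.finite_UNIV] by blast
  have les: "length es = CARD('n)" using distinct_card[OF es(1)] es(2) by simp
  define f where "f \<alpha> = map \<alpha> es @ [d - mdeg \<alpha>]" for \<alpha> :: "'n mindex"
  define B where "B = {l::nat list. size l = CARD('n) + 1 \<and> sum_list l = d}"
  have sl: "sum_list (map \<alpha> es) = mdeg \<alpha>" for \<alpha> :: "'n mindex"
    using sum_list_distinct_conv_sum_set[OF es(1)] es(2) by (simp add: mdeg_def)
  have inj: "inj_on f (mindices d)"
  proof (rule inj_onI)
    fix \<alpha> \<beta> assume "f \<alpha> = f \<beta>"
    then have "map \<alpha> es = map \<beta> es" unfolding f_def by simp
    then show "\<alpha> = \<beta>" using es(2) by (auto simp: fun_eq_iff map_eq_conv)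
  qed
  have img: "f ` mindices d \<subseteq> B"
    unfolding B_def f_def using les sl by (auto simp: mindices_def)
  have fB: "finite B"
  proof (rule finite_subset)
    show "B \<subseteq> {xs. set xs \<subseteq> {..d} \<and> length xs = CARD('n) + 1}"
      unfolding B_def using member_le_sum_list by fastforce
  qed (rule finite_lists_length_eq; simp)
  have "card (mindices d :: 'n mindex set) \<le> card B"
    by (rule card_inj_on_le[OF inj img fB])
  also have "card B = Ndim CARD('n) d"
    unfolding B_def card_length_sum_list by (simp add: Ndim_def add.commute)
  finally show ?thesis .
qed

lemma mono_add: "mono x (\<alpha> + \<beta>) = mono x \<alpha> * mono x \<beta>"
  by (simp add: mono_def power_add prod.distrib)

lemma mono_index_0: "mono x (\<lambda>_. 0) = 1"
  by (simp add: mono_def)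

lemma mono_scaleR: "mono (r *\<^sub>R x) \<gamma> = r ^ mdeg \<gamma> * mono x \<gamma>"
  by (simp add: mono_def mdeg_def power_mult_distrib prod.distrib power_sum)

lemma mono_tendsto:
  assumes "(f \<longlongrightarrow> v) F"
  shows "((\<lambda>k. mono (f k) \<gamma>) \<longlongrightarrow> mono v \<gamma>) F"
  unfolding mono_def by (intro tendsto_prod tendsto_power tendsto_vec_nth assms)

lemma mono_replace_coordinate:
  fixes x :: "real^'n::finite"
  shows "mono (\<chi> i. if i = j then t else x $ i) \<alpha> = t ^ \<alpha> j * mono x (\<alpha>(j := 0))"
proof -
  have "mono (\<chi> i. if i = j then t else x $ i) \<alpha> = t ^ \<alpha> j * (\<Prod>i\<in>UNIV - {j}. x $ i ^ \<alpha> i)"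
    unfolding mono_def by (subst prod.remove[of UNIV j]) (auto intro!: prod.cong)
  moreover have "mono x (\<alpha>(j := 0)) = (\<Prod>i\<in>UNIV - {j}. x $ i ^ \<alpha> i)"
    unfolding mono_def by (subst prod.remove[of UNIV j]) (auto intro!: prod.cong)
  ultimately show ?thesis by simp
qed

lemma mono_diff_expansion:
  fixes a x :: "real^'n::finite"
  assumes "\<alpha> \<in> mindices d"
  shows "mono (x - a) \<alpha> = (\<Sum>\<beta>\<in>mindices d. shifted_mono a \<alpha> \<beta> * mono x \<beta>)"
proof -
  define Box where "Box = PiE (UNIV::'n set) (\<lambda>i. {..\<alpha> i})"
  have in_Box: "\<beta> \<in> Box \<longleftrightarrow> (\<forall>i. \<beta> i \<le> \<alpha> i)" for \<beta>
    by (auto simp: Box_def PiE_UNIV_domain)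
  have Box_sub: "Box \<subseteq> mindices d"
  proof
    fix \<beta> assume "\<beta> \<in> Box"
    then have "mdeg \<beta> \<le> mdeg \<alpha>" unfolding mdeg_def in_Box by (intro sum_mono) auto
    then show "\<beta> \<in> mindices d" using assms by (simp add: mindices_def)
  qed
  have "mono (x - a) \<alpha> = (\<Prod>i\<in>UNIV. \<Sum>b\<le>\<alpha> i. real (\<alpha> i choose b) * x $ i ^ b * (- a $ i) ^ (\<alpha> i - b))"
    by (simp add: mono_def binomial_ring[symmetric])
  also have "\<dots> = (\<Sum>\<beta>\<in>Box. \<Prod>i\<in>UNIV. real (\<alpha> i choose \<beta> i) * x $ i ^ \<beta> i * (- a $ i) ^ (\<alpha> i - \<beta> i))"
    unfolding Box_def by (rule prod_sum_PiE) auto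
  also have "\<dots> = (\<Sum>\<beta>\<in>Box. shifted_mono a \<alpha> \<beta> * mono x \<beta>)"
    by (intro sum.cong refl)
      (simp add: in_Box shifted_mono_def mono_def prod.distrib[symmetric] algebra_simps)
  also have "\<dots> = (\<Sum>\<beta>\<in>mindices d. shifted_mono a \<alpha> \<beta> * mono x \<beta>)"
    using Box_sub finite_mindices in_Box
    by (intro sum.mono_neutral_left) (auto simp: shifted_mono_def)
  finally show ?thesis .
qed

lemma mono_at_0: "mono (0::real^'n::finite) \<alpha> = (if \<alpha> = (\<lambda>_. 0) then 1 else 0)"
proof (cases "\<alpha> = (\<lambda>_. 0)")
  case False
  then obtain i where "\<alpha> i \<noteq> 0" by auto
  then have "mono (0::real^'n) \<alpha> = 0" unfolding mono_def by (intro prod_zero) auto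
  then show ?thesis using False by simp
qed (simp add: mono_index_0)

lemma dapply_delta: "dapply d (delta d x) c = (\<Sum>\<alpha>\<in>mindices d. c \<alpha> * mono x \<alpha>)"
  unfolding dapply_def delta_def by (intro sum.cong) auto

lemma dapply_scale: "dapply d (\<lambda>\<beta>. t * \<zeta> \<beta>) c = t * dapply d \<zeta> c"
  unfolding dapply_def sum_distrib_left by (intro sum.cong) auto

lemma dapply_delta_shifted_mono:
  assumes "\<alpha> \<in> mindices d"
  shows "dapply d (delta d a) (shifted_mono a \<alpha>) = (if \<alpha> = (\<lambda>_. 0) then 1 else 0)"
  unfolding dapply_delta mono_diff_expansion[OF assms, symmetric] by (simp add: mono_at_0)

section \<open>Polynomial functions\<close>

definition polyfun :: "nat \<Rightarrow> (real^'n::finite \<Rightarrow> real) \<Rightarrow> bool" where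
  "polyfun j f \<longleftrightarrow> (\<exists>c. \<forall>x. f x = (\<Sum>\<alpha>\<in>mindices j. c \<alpha> * mono x \<alpha>))"

lemma polyfun_degree_mono:
  assumes "polyfun i f" "i \<le> j" shows "polyfun j f"
proof -
  obtain c where c: "\<And>x. f x = (\<Sum>\<alpha>\<in>mindices i. c \<alpha> * mono x \<alpha>)"
    using assms unfolding polyfun_def by blast
  define c' where "c' \<alpha> = (if \<alpha> \<in> mindices i then c \<alpha> else 0)" for \<alpha>
  have "f x = (\<Sum>\<alpha>\<in>mindices j. c' \<alpha> * mono x \<alpha>)" for x
  proof -
    have "f x = (\<Sum>\<alpha>\<in>mindices i. c' \<alpha> * mono x \<alpha>)" by (simp add: c c'_def)
    also have "\<dots> = (\<Sum>\<alpha>\<in>mindices j. c' \<alpha> * mono x \<alpha>)"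
      using mindices_mono[OF assms(2)] finite_mindices
      by (intro sum.mono_neutral_left) (auto simp: c'_def)
    finally show ?thesis .
  qed
  then show ?thesis unfolding polyfun_def by blast
qed

lemma polyfun_const: "polyfun j (\<lambda>x. a)"
proof -
  have "polyfun 0 (\<lambda>x. a)"
    unfolding polyfun_def mindices_0 by (rule exI[of _ "\<lambda>_. a"]) (simp add: mono_index_0)
  then show ?thesis by (rule polyfun_degree_mono) simp
qed

lemma polyfun_mono: "mdeg \<alpha> \<le> j \<Longrightarrow> polyfun j (\<lambda>x::real^'n::finite. mono x \<alpha>)"
proof -
  assume "mdeg \<alpha> \<le> j"
  then have "mono x \<alpha> = (\<Sum>\<beta>\<in>mindices j. (if \<beta> = \<alpha> then 1 else 0) * mono x \<beta>)" for x
  proof -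
    have "(\<Sum>\<beta>\<in>mindices j. (if \<beta> = \<alpha> then 1 else 0) * mono x \<beta>)
        = (\<Sum>\<beta>\<in>mindices j. if \<beta> = \<alpha> then mono x \<beta> else 0)"
      by (intro sum.cong) auto
    also have "\<dots> = mono x \<alpha>"
      using \<open>mdeg \<alpha> \<le> j\<close> finite_mindices[where 'n='n and d=j] by (simp add: mindices_def)
    finally show ?thesis by simp
  qed
  then show ?thesis unfolding polyfun_def by (intro exI[of _ "\<lambda>\<beta>. if \<beta> = \<alpha> then 1 else 0"]) blast
qed

lemma polyfun_add:
  assumes "polyfun j f" "polyfun j g" shows "polyfun j (\<lambda>x. f x + g x)"
proof -
  obtain c e where "\<And>x. f x = (\<Sum>\<alpha>\<in>mindices j. c \<alpha> * mono x \<alpha>)"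
    "\<And>x. g x = (\<Sum>\<alpha>\<in>mindices j. e \<alpha> * mono x \<alpha>)"
    using assms unfolding polyfun_def by metis
  then have "f x + g x = (\<Sum>\<alpha>\<in>mindices j. (c \<alpha> + e \<alpha>) * mono x \<alpha>)" for x
    by (simp add: sum.distrib distrib_right)
  then show ?thesis unfolding polyfun_def by (intro exI[of _ "\<lambda>\<alpha>. c \<alpha> + e \<alpha>"]) blast
qed

lemma polyfun_cmult:
  assumes "polyfun j f" shows "polyfun j (\<lambda>x. a * f x)"
proof -
  obtain c where "\<And>x. f x = (\<Sum>\<alpha>\<in>mindices j. c \<alpha> * mono x \<alpha>)"
    using assms unfolding polyfun_def by metis
  then have "a * f x = (\<Sum>\<alpha>\<in>mindices j. (a * c \<alpha>) * mono x \<alpha>)" for x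
    by (simp add: sum_distrib_left mult.assoc)
  then show ?thesis unfolding polyfun_def by (intro exI[of _ "\<lambda>\<alpha>. a * c \<alpha>"]) blast
qed

lemma polyfun_sum:
  assumes "finite S" "\<And>i. i \<in> S \<Longrightarrow> polyfun j (f i)"
  shows "polyfun j (\<lambda>x. \<Sum>i\<in>S. f i x)"
  using assms by (induction S rule: finite_induct) (auto intro: polyfun_add polyfun_const[of j 0, simplified])

lemma polyfun_mult:
  fixes f g :: "real^'n::finite \<Rightarrow> real"
  assumes "polyfun i f" "polyfun j g" shows "polyfun (i + j) (\<lambda>x. f x * g x)"
proof -
  obtain c e where c: "\<And>x. f x = (\<Sum>\<alpha>\<in>mindices i. c \<alpha> * mono x \<alpha>)"
    and e: "\<And>x. g x = (\<Sum>\<alpha>\<in>mindices j. e \<alpha> * mono x \<alpha>)"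
    using assms unfolding polyfun_def by metis
  define P where "P = (mindices i :: 'n mindex set) \<times> (mindices j :: 'n mindex set)"
  have "finite P" unfolding P_def using finite_mindices by (intro finite_cartesian_product)
  define h where "h \<gamma> = (\<Sum>p\<in>{p\<in>P. fst p + snd p = \<gamma>}. c (fst p) * e (snd p))" for \<gamma>
  have img: "(\<lambda>p. fst p + snd p) ` P \<subseteq> mindices (i + j)"
    by (auto simp: P_def mindices_def mdeg_add)
  have "f x * g x = (\<Sum>\<gamma>\<in>mindices (i+j). h \<gamma> * mono x \<gamma>)" for x
  proof -
    have "f x * g x = (\<Sum>p\<in>P. c (fst p) * e (snd p) * mono x (fst p + snd p))"
      unfolding c e sum_product P_def sum.cartesian_product by (intro sum.cong) (auto simp: mono_add)
    also have "\<dots> = (\<Sum>\<gamma>\<in>mindices (i+j). \<Sum>p\<in>{p\<in>P. fst p + snd p = \<gamma>}. c (fst p) * e (snd p) * mono x (fst p + snd p))"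
      by (rule sum.group[OF \<open>finite P\<close> finite_mindices img, symmetric])
    also have "\<dots> = (\<Sum>\<gamma>\<in>mindices (i+j). h \<gamma> * mono x \<gamma>)"
      unfolding h_def sum_distrib_right by (intro sum.cong refl) auto
    finally show ?thesis .
  qed
  then show ?thesis unfolding polyfun_def by blast
qed

lemma polyfun_power:
  assumes "polyfun i f" shows "polyfun (i * k) (\<lambda>x. f x ^ k)"
proof (induction k)
  case (Suc k)
  show ?case using polyfun_mult[OF assms Suc] by simp
qed (use polyfun_const[of 0 1] in simp)

lemma polyfun_prod:
  assumes "finite S" "\<And>i. i \<in> S \<Longrightarrow> polyfun (dg i) (f i)"
  shows "polyfun (\<Sum>i\<in>S. dg i) (\<lambda>x. \<Prod>i\<in>S. f i x)"
  using assms
proof (induction S rule: finite_induct)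
  case (insert a S)
  then show ?case using polyfun_mult[of "dg a" "f a" "\<Sum>i\<in>S. dg i"] by simp
qed (use polyfun_const[of 0 1] in simp)

lemma polyfun_component: "polyfun 1 (\<lambda>x. x $ i)"
proof -
  define \<alpha> where "\<alpha> = (\<lambda>k. if k = i then 1 else (0::nat))"
  have "mono x \<alpha> = x $ i" for x
    unfolding mono_def \<alpha>_def by (simp add: if_distrib prod.delta cong: if_cong)
  moreover have "mdeg \<alpha> \<le> 1" unfolding mdeg_def \<alpha>_def by simp
  ultimately show ?thesis using polyfun_mono[of \<alpha> 1] by simp
qed

lemma polyfun_affine_comp:
  fixes L :: "real^'n::finite \<Rightarrow> real^'n"
  assumes "linear L" "polyfun j f"
  shows "polyfun j (\<lambda>x. f (b + L x))"
proof -
  obtain c where c: "\<And>x. f x = (\<Sum>\<alpha>\<in>mindices j. c \<alpha> * mono x \<alpha>)"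
    using assms unfolding polyfun_def by metis
  have affine_component: "polyfun 1 (\<lambda>x. (b + L x) $ i)" for i
  proof -
    have "(b + L x) $ i = b $ i + (\<Sum>l\<in>UNIV. matrix L $ i $ l * x $ l)" for x
    proof -
      have "L x = matrix L *v x" using fun_cong[OF matrix_vector_mul(2)[OF assms(1)], of x] by simp
      then show ?thesis by (simp add: matrix_vector_mult_def)
    qed
    then have coord: "(\<lambda>x. (b + L x) $ i) = (\<lambda>x. b $ i + (\<Sum>l\<in>UNIV. matrix L $ i $ l * x $ l))"
      by simp
    show ?thesis unfolding coord
      by (intro polyfun_add polyfun_const polyfun_sum polyfun_cmult polyfun_component finite_class.finite_UNIV)
  qed
  have mono_affine: "polyfun (mdeg \<alpha>) (\<lambda>x. mono (b + L x) \<alpha>)" for \<alpha>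
  proof -
    have "polyfun (\<Sum>i\<in>UNIV. 1 * \<alpha> i) (\<lambda>x. \<Prod>i\<in>UNIV. ((b + L x) $ i) ^ \<alpha> i)"
      by (intro polyfun_prod polyfun_power affine_component finite_class.finite_UNIV)
    then show ?thesis by (simp add: mono_def mdeg_def)
  qed
  have "polyfun j (\<lambda>x. \<Sum>\<alpha>\<in>mindices j. c \<alpha> * mono (b + L x) \<alpha>)"
  proof (intro polyfun_sum[OF finite_mindices] polyfun_cmult)
    fix \<alpha> :: "'n mindex" assume "\<alpha> \<in> mindices j"
    then show "polyfun j (\<lambda>x. mono (b + L x) \<alpha>)"
      using polyfun_degree_mono[OF mono_affine] by (simp add: mindices_def)
  qed
  then show ?thesis by (simp add: c)
qed

lemma mono_slices_eq_0:
  fixes c :: "('n::finite) mindex \<Rightarrow> real"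
  assumes "finite F" and vanish: "\<forall>x::real^'n. (\<Sum>\<alpha>\<in>F. c \<alpha> * mono x \<alpha>) = 0"
  shows "(\<Sum>\<alpha>\<in>{\<alpha>\<in>F. \<alpha> j = k}. c \<alpha> * mono x (\<alpha>(j := 0))) = 0"
proof -
  define K where "K = Max ((\<lambda>\<alpha>. \<alpha> j) ` F)"
  have K: "\<alpha> \<in> F \<Longrightarrow> \<alpha> j \<le> K" for \<alpha> unfolding K_def using \<open>finite F\<close> by (intro Max_ge) auto
  define a where "a k = (\<Sum>\<alpha>\<in>{\<alpha>\<in>F. \<alpha> j = k}. c \<alpha> * mono x (\<alpha>(j := 0)))" for k
  have "(\<Sum>k\<le>K. a k * t ^ k) = 0" for t
  proof -
    have "0 = (\<Sum>\<alpha>\<in>F. c \<alpha> * mono (\<chi> i. if i = j then t else x $ i) \<alpha>)"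
      using vanish by simp
    also have "\<dots> = (\<Sum>\<alpha>\<in>F. c \<alpha> * (t ^ \<alpha> j * mono x (\<alpha>(j := 0))))"
      by (simp add: mono_replace_coordinate)
    also have "\<dots> = (\<Sum>k\<le>K. \<Sum>\<alpha>\<in>{\<alpha>\<in>F. \<alpha> j = k}. c \<alpha> * (t ^ \<alpha> j * mono x (\<alpha>(j := 0))))"
      using K by (intro sum.group[symmetric] \<open>finite F\<close>) auto
    also have "\<dots> = (\<Sum>k\<le>K. a k * t ^ k)"
      unfolding a_def sum_distrib_right by (intro sum.cong refl) (auto simp: algebra_simps)
    finally show ?thesis by simp
  qed
  then have "a k = 0" if "k \<le> K" using polyfun_eq_0[of a K] that by auto
  moreover have "a k = 0" if "\<not> k \<le> K" using K that unfolding a_def by (intro sum.neutral) fastforce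
  ultimately show ?thesis unfolding a_def by blast
qed

text \<open>Identity theorem, by induction on the set \<open>S\<close> of variables that may occur: the monomials
  containing \<open>x\<^sub>j\<^sup>k\<close> form a slice that vanishes by \<open>mono_slices_eq_0\<close>.\<close>

lemma mono_coeffs_eq_0_supported:
  fixes S :: "('n::finite) set" and c :: "'n mindex \<Rightarrow> real"
  assumes "finite S" "finite F" "\<forall>\<alpha>\<in>F. \<forall>i. i \<notin> S \<longrightarrow> \<alpha> i = 0"
    "\<forall>x::real^'n. (\<Sum>\<alpha>\<in>F. c \<alpha> * mono x \<alpha>) = 0"
  shows "\<forall>\<alpha>\<in>F. c \<alpha> = 0"
  using assms
proof (induction S arbitrary: F c rule: finite_induct)
  case empty
  then have "F \<subseteq> {\<lambda>_. 0}" by auto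
  then show ?case using empty.prems(3) by (auto simp: subset_singleton_iff mono_index_0)
next
  case (insert j S)
  show ?case
  proof
    fix \<alpha> assume "\<alpha> \<in> F"
    define G where "G = {\<beta>\<in>F. \<beta> j = \<alpha> j}"
    have inj: "inj_on (\<lambda>\<beta>. \<beta>(j := 0)) G"
    proof (rule inj_onI)
      fix u v assume "u \<in> G" "v \<in> G" and eq: "u(j := 0) = v(j := 0)"
      then have "u j = v j" unfolding G_def by simp
      then show "u = v" using eq by (metis fun_upd_triv fun_upd_upd)
    qed
    have "\<forall>\<beta>\<in>(\<lambda>\<beta>. \<beta>(j := 0)) ` G. c (\<beta>(j := \<alpha> j)) = 0"
    proof (rule insert.IH)
      show "finite ((\<lambda>\<beta>. \<beta>(j := 0)) ` G)" unfolding G_def using insert.prems(1) by simp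
      show "\<forall>\<beta>\<in>(\<lambda>\<beta>. \<beta>(j := 0)) ` G. \<forall>i. i \<notin> S \<longrightarrow> \<beta> i = 0"
        using insert.prems(2) unfolding G_def by auto
      show "\<forall>x::real^'n. (\<Sum>\<beta>\<in>(\<lambda>\<beta>. \<beta>(j := 0)) ` G. c (\<beta>(j := \<alpha> j)) * mono x \<beta>) = 0"
      proof
        fix x :: "real^'n"
        have "(\<Sum>\<beta>\<in>(\<lambda>\<beta>. \<beta>(j := 0)) ` G. c (\<beta>(j := \<alpha> j)) * mono x \<beta>)
            = (\<Sum>\<beta>\<in>G. c ((\<beta>(j := 0))(j := \<alpha> j)) * mono x (\<beta>(j := 0)))"
          by (rule sum.reindex[OF inj, unfolded o_def])
        also have "\<dots> = (\<Sum>\<beta>\<in>{\<beta>\<in>F. \<beta> j = \<alpha> j}. c \<beta> * mono x (\<beta>(j := 0)))"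
          unfolding G_def by (intro sum.cong refl) (simp add: fun_upd_idem)
        also have "\<dots> = 0" by (rule mono_slices_eq_0[OF insert.prems(1,3)])
        finally show "(\<Sum>\<beta>\<in>(\<lambda>\<beta>. \<beta>(j := 0)) ` G. c (\<beta>(j := \<alpha> j)) * mono x \<beta>) = 0" .
      qed
    qed
    moreover have "\<alpha>(j := 0) \<in> (\<lambda>\<beta>. \<beta>(j := 0)) ` G" unfolding G_def using \<open>\<alpha> \<in> F\<close> by auto
    ultimately have "c ((\<alpha>(j := 0))(j := \<alpha> j)) = 0" by blast
    then show "c \<alpha> = 0" by simp
  qed
qed

lemma mono_coeffs_eq_0:
  fixes c :: "('n::finite) mindex \<Rightarrow> real"
  assumes "\<And>x::real^'n. (\<Sum>\<alpha>\<in>mindices d. c \<alpha> * mono x \<alpha>) = 0"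
  shows "\<forall>\<alpha>\<in>mindices d. c \<alpha> = 0"
  using mono_coeffs_eq_0_supported[OF finite_class.finite_UNIV finite_mindices, of d c] assms by simp

section \<open>Separating families of functionals\<close>

context
begin

interpretation real_fun: vector_space "\<lambda>(r::real) (f::'a \<Rightarrow> real). (\<lambda>x. r * f x)"
  by unfold_locales (auto simp: fun_eq_iff algebra_simps plus_fun_def)

lemma sum_fun_apply: "(sum f S) x = (\<Sum>i\<in>S. f i x :: real)"
  by (induction S rule: infinite_finite_induct) auto

lemma real_fun_span_indicators:
  assumes "finite M" "\<forall>\<alpha>. \<alpha> \<notin> M \<longrightarrow> \<zeta> \<alpha> = 0"
  shows "\<zeta> \<in> real_fun.span ((\<lambda>\<alpha> x. if x = \<alpha> then 1 else 0) ` M)"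
proof -
  have "\<zeta> = (\<Sum>\<alpha>\<in>M. (\<lambda>x. \<zeta> \<alpha> * (if x = \<alpha> then 1 else 0)))"
  proof
    fix y
    have "(\<Sum>\<alpha>\<in>M. (\<lambda>x. \<zeta> \<alpha> * (if x = \<alpha> then 1 else 0))) y = (\<Sum>\<alpha>\<in>M. if y = \<alpha> then \<zeta> \<alpha> else 0)"
      unfolding sum_fun_apply by (intro sum.cong) auto
    then show "\<zeta> y = (\<Sum>\<alpha>\<in>M. (\<lambda>x. \<zeta> \<alpha> * (if x = \<alpha> then 1 else 0))) y"
      using assms by (simp add: sum.delta)
  qed
  also have "\<dots> \<in> real_fun.span ((\<lambda>\<alpha> x. if x = \<alpha> then 1 else 0) ` M)"
  proof (rule real_fun.span_sum)
    fix \<alpha> assume "\<alpha> \<in> M"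
    then show "(\<lambda>x. \<zeta> \<alpha> * (if x = \<alpha> then 1 else 0)) \<in> real_fun.span ((\<lambda>\<alpha> x. if x = \<alpha> then 1 else 0) ` M)"
      by (rule real_fun.span_scale[OF real_fun.span_base[OF imageI]])
  qed
  finally show ?thesis .
qed

lemma real_fun_span_annihilated:
  assumes "\<forall>b\<in>B. (\<Sum>\<alpha>\<in>M. c \<alpha> * b \<alpha>) = 0" "\<zeta> \<in> real_fun.span B"
  shows "(\<Sum>\<alpha>\<in>M. c \<alpha> * \<zeta> \<alpha>) = 0"
proof -
  have "real_fun.subspace {\<zeta>. (\<Sum>\<alpha>\<in>M. c \<alpha> * \<zeta> \<alpha>) = 0}"
  proof (unfold real_fun.subspace_def, intro conjI ballI allI)
    fix r :: real and \<zeta> :: "'a \<Rightarrow> real"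
    have "(\<Sum>\<alpha>\<in>M. c \<alpha> * (r * \<zeta> \<alpha>)) = r * (\<Sum>\<alpha>\<in>M. c \<alpha> * \<zeta> \<alpha>)"
      by (simp add: sum_distrib_left algebra_simps)
    then show "\<zeta> \<in> {\<zeta>. (\<Sum>\<alpha>\<in>M. c \<alpha> * \<zeta> \<alpha>) = 0} \<Longrightarrow> (\<lambda>x. r * \<zeta> x) \<in> {\<zeta>. (\<Sum>\<alpha>\<in>M. c \<alpha> * \<zeta> \<alpha>) = 0}"
      by simp
  qed (simp_all add: distrib_left sum.distrib)
  then show ?thesis
    using real_fun.span_induct[OF assms(2), of "\<lambda>\<zeta>. (\<Sum>\<alpha>\<in>M. c \<alpha> * \<zeta> \<alpha>) = 0"] assms(1) by blast
qed

lemma exists_nonzero_annihilating_coeffs: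
  fixes B :: "('a \<Rightarrow> real) set"
  assumes fM: "finite M" and fB: "finite B" and less: "card B < card M"
  obtains c \<alpha>0 where "\<forall>b\<in>B. (\<Sum>\<alpha>\<in>M. c \<alpha> * b \<alpha>) = 0" "\<alpha>0 \<in> M" "c \<alpha>0 \<noteq> 0"
proof -
  define g where "g \<alpha> = (\<lambda>b. if b \<in> B then b \<alpha> else (0::real))" for \<alpha>
  define U where "U = (\<lambda>b x. if x = b then 1 else (0::real)) ` B"
  have U: "finite U" "card U \<le> card B" unfolding U_def using fB by (auto intro: card_image_le)
  have gU: "g \<alpha> \<in> real_fun.span U" for \<alpha>
    unfolding U_def by (rule real_fun_span_indicators[OF fB]) (simp add: g_def)
  show ?thesis
  proof (cases "inj_on g M")
    case False
    then obtain a1 a2 where a: "a1 \<in> M" "a2 \<in> M" "a1 \<noteq> a2" "g a1 = g a2"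
      unfolding inj_on_def by blast
    define c where "c \<beta> = (if \<beta> = a1 then 1 else 0) - (if \<beta> = a2 then 1 else (0::real))" for \<beta>
    have "(\<Sum>\<alpha>\<in>M. c \<alpha> * b \<alpha>) = 0" if "b \<in> B" for b
    proof -
      have "(\<Sum>\<alpha>\<in>M. c \<alpha> * b \<alpha>) = (\<Sum>\<alpha>\<in>M. (if \<alpha> = a1 then b \<alpha> else 0) - (if \<alpha> = a2 then b \<alpha> else 0))"
        unfolding c_def by (intro sum.cong) auto
      also have "\<dots> = b a1 - b a2"
        using a fM by (simp add: sum_subtractf sum.delta')
      also have "\<dots> = 0" using fun_cong[OF a(4), of b] that by (simp add: g_def)
      finally show ?thesis .
    qed
    then show ?thesis using that[of c a1] a by (simp add: c_def)
  next
    case True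
    have "\<not> real_fun.independent (g ` M)"
    proof
      assume "real_fun.independent (g ` M)"
      then have "card (g ` M) \<le> card U" using real_fun.independent_span_bound[OF U(1)] gU by blast
      then show False using card_image[OF True] less U by simp
    qed
    then obtain T u where T: "finite T" "T \<subseteq> g ` M" "(\<Sum>v\<in>T. (\<lambda>x. u v * v x)) = 0"
      and "\<exists>v\<in>T. u v \<noteq> 0"
      unfolding real_fun.dependent_explicit by blast
    then obtain a0 where a0: "a0 \<in> M" "g a0 \<in> T" "u (g a0) \<noteq> 0" by blast
    define c where "c \<alpha> = (if g \<alpha> \<in> T then u (g \<alpha>) else 0)" for \<alpha>
    define MT where "MT = {\<alpha>\<in>M. g \<alpha> \<in> T}"
    have gMT: "g ` MT = T" unfolding MT_def using T(2) by auto
    have injMT: "inj_on g MT" using True unfolding MT_def by (rule inj_on_subset) auto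
    have "(\<Sum>\<alpha>\<in>M. c \<alpha> * b \<alpha>) = 0" if "b \<in> B" for b
    proof -
      have "(\<Sum>\<alpha>\<in>M. c \<alpha> * b \<alpha>) = (\<Sum>\<alpha>\<in>MT. u (g \<alpha>) * g \<alpha> b)"
        unfolding c_def MT_def using fM that
        by (intro sum.mono_neutral_cong_right) (auto simp: g_def)
      also have "\<dots> = (\<Sum>v\<in>T. u v * v b)"
        using sum.reindex[OF injMT, of "\<lambda>v. u v * v b"] gMT by simp
      also have "\<dots> = 0" using fun_cong[OF T(3), of b] by (simp add: sum_fun_apply)
      finally show ?thesis .
    qed
    then show ?thesis using that[of c a0] a0 by (simp add: c_def)
  qed
qed

lemma separating_family_spans:
  fixes Z :: "('a \<Rightarrow> real) set"
  assumes fM: "finite M" and ZM: "\<forall>\<zeta>\<in>Z. \<forall>\<alpha>. \<alpha> \<notin> M \<longrightarrow> \<zeta> \<alpha> = 0"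
    and sep: "\<forall>c. (\<forall>\<zeta>\<in>Z. (\<Sum>\<alpha>\<in>M. c \<alpha> * \<zeta> \<alpha>) = 0) \<longrightarrow> (\<forall>\<alpha>\<in>M. c \<alpha> = 0)"
    and \<xi>M: "\<forall>\<alpha>. \<alpha> \<notin> M \<longrightarrow> \<xi> \<alpha> = 0"
  obtains F u where "finite F" "F \<subseteq> Z" "card F \<le> card M" "\<xi> = (\<lambda>\<alpha>. \<Sum>v\<in>F. u v * v \<alpha>)"
proof -
  define U where "U = (\<lambda>\<alpha> x. if x = \<alpha> then 1 else (0::real)) ` M"
  have U: "finite U" "card U \<le> card M" unfolding U_def using fM by (auto intro: card_image_le)
  have spanU: "\<zeta> \<in> real_fun.span U" if "\<forall>\<alpha>. \<alpha> \<notin> M \<longrightarrow> \<zeta> \<alpha> = 0" for \<zeta>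
    unfolding U_def using real_fun_span_indicators[OF fM that] .
  obtain B where BZ: "B \<subseteq> Z" and indB: "real_fun.independent B" and ZB: "Z \<subseteq> real_fun.span B"
    by (rule real_fun.maximal_independent_subset)
  have BU: "B \<subseteq> real_fun.span U" using BZ ZM spanU by blast
  then have B: "finite B" "card B \<le> card U" using real_fun.independent_span_bound[OF U(1) indB] by auto
  have "\<not> card B < card M"
  proof
    assume "card B < card M"
    then obtain c \<alpha>0 where c: "\<forall>b\<in>B. (\<Sum>\<alpha>\<in>M. c \<alpha> * b \<alpha>) = 0" "\<alpha>0 \<in> M" "c \<alpha>0 \<noteq> 0"
      using exists_nonzero_annihilating_coeffs[OF fM B(1)] by metis
    have "\<forall>\<zeta>\<in>Z. (\<Sum>\<alpha>\<in>M. c \<alpha> * \<zeta> \<alpha>) = 0" using real_fun_span_annihilated[OF c(1)] ZB by blast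
    then show False using sep c by blast
  qed
  have "\<xi> \<in> real_fun.span B"
  proof (rule ccontr)
    assume \<xi>B: "\<xi> \<notin> real_fun.span B"
    then have "real_fun.independent (insert \<xi> B)" using indB by (rule real_fun.independent_insertI)
    moreover have "insert \<xi> B \<subseteq> real_fun.span U" using BU spanU[OF \<xi>M] by blast
    ultimately have "card (insert \<xi> B) \<le> card U" using real_fun.independent_span_bound[OF U(1)] by blast
    moreover have "\<xi> \<notin> B" using \<xi>B real_fun.span_base by blast
    ultimately show False using \<open>\<not> card B < card M\<close> B U by simp
  qed
  then obtain u where "\<xi> = (\<Sum>v\<in>B. (\<lambda>x. u v * v x))"
    using real_fun.span_finite[OF B(1)] by blast
  then have "\<xi> = (\<lambda>\<alpha>. \<Sum>v\<in>B. u v * v \<alpha>)" by (auto simp: fun_eq_iff sum_fun_apply)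
  then show ?thesis using that B U BZ by auto
qed

end

definition separates_polys :: "nat \<Rightarrow> (('n::finite) mindex \<Rightarrow> real) set \<Rightarrow> bool" where
  "separates_polys d Z \<longleftrightarrow> (\<forall>c. (\<forall>\<zeta>\<in>Z. dapply d \<zeta> c = 0) \<longrightarrow> (\<forall>\<alpha>\<in>mindices d. c \<alpha> = 0))"

lemma dual_space_subset_fspan:
  fixes Z :: "(('n::finite) mindex \<Rightarrow> real) set"
  assumes "separates_polys d Z" "Z \<subseteq> dual_space d"
  shows "dual_space d \<subseteq> fspan Z"
proof
  fix \<xi> :: "'n mindex \<Rightarrow> real" assume "\<xi> \<in> dual_space d"
  then have \<xi>M: "\<forall>\<alpha>. \<alpha> \<notin> mindices d \<longrightarrow> \<xi> \<alpha> = 0" by (simp add: dual_space_def)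
  have ZM: "\<forall>\<zeta>\<in>Z. \<forall>\<alpha>. \<alpha> \<notin> mindices d \<longrightarrow> \<zeta> \<alpha> = 0"
    using assms(2) by (auto simp: dual_space_def)
  have sep: "\<forall>c. (\<forall>\<zeta>\<in>Z. (\<Sum>\<alpha>\<in>mindices d. c \<alpha> * \<zeta> \<alpha>) = 0) \<longrightarrow> (\<forall>\<alpha>\<in>mindices d. c \<alpha> = 0)"
    using assms(1) by (simp add: separates_polys_def dapply_def)
  show "\<xi> \<in> fspan Z"
  proof (rule separating_family_spans[OF finite_mindices ZM sep \<xi>M])
    fix F u assume "finite F" "F \<subseteq> Z" "\<xi> = (\<lambda>\<alpha>. \<Sum>v\<in>F. u v * v \<alpha>)"
    then show ?thesis unfolding fspan_def by blast
  qed
qed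

lemma dual_space_eq_sum_deltas:
  fixes Y :: "(real^'n::finite) set"
  assumes "separates_polys d (delta d ` Y)" "y \<in> Y" "card (mindices d :: 'n mindex set) \<le> N + 1"
    "\<xi> \<in> dual_space d"
  obtains ys c where "\<forall>i\<le>N. ys i \<in> Y" "\<forall>\<gamma>\<in>mindices d. \<xi> \<gamma> = (\<Sum>i\<le>N. c i * mono (ys i) \<gamma>)"
proof -
  have \<xi>M: "\<forall>\<alpha>. \<alpha> \<notin> mindices d \<longrightarrow> \<xi> \<alpha> = 0" using assms(4) by (simp add: dual_space_def)
  have ZM: "\<forall>\<zeta>\<in>delta d ` Y. \<forall>\<alpha>. \<alpha> \<notin> mindices d \<longrightarrow> \<zeta> \<alpha> = 0"
    by (auto simp: delta_def)
  have sep: "\<forall>c. (\<forall>\<zeta>\<in>delta d ` Y. (\<Sum>\<alpha>\<in>mindices d. c \<alpha> * \<zeta> \<alpha>) = 0) \<longrightarrow> (\<forall>\<alpha>\<in>mindices d. c \<alpha> = 0)"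
    using assms(1) by (simp add: separates_polys_def dapply_def)
  show ?thesis
  proof (rule separating_family_spans[OF finite_mindices ZM sep \<xi>M])
    fix F u assume F: "finite F" "F \<subseteq> delta d ` Y" "card F \<le> card (mindices d :: 'n mindex set)"
      "\<xi> = (\<lambda>\<alpha>. \<Sum>v\<in>F. u v * v \<alpha>)"
    obtain en where en: "bij_betw en {0..<card F} F" using ex_bij_betw_nat_finite[OF F(1)] by blast
    then have enF: "i < card F \<Longrightarrow> en i \<in> F" for i by (auto simp: bij_betw_def)
    have card_F: "card F \<le> N + 1" using F(3) assms(3) by (rule order.trans)
    have "\<forall>v\<in>F. \<exists>y. y \<in> Y \<and> v = delta d y" using F(2) by blast
    from bchoice[OF this] obtain pt where pt: "\<forall>v\<in>F. pt v \<in> Y \<and> v = delta d (pt v)" ..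
    define ys where "ys i = (if i < card F then pt (en i) else y)" for i
    define c where "c i = (if i < card F then u (en i) else 0)" for i
    have "\<forall>i\<le>N. ys i \<in> Y" using pt enF assms(2) by (simp add: ys_def)
    moreover have "\<forall>\<gamma>\<in>mindices d. \<xi> \<gamma> = (\<Sum>i\<le>N. c i * mono (ys i) \<gamma>)"
    proof
      fix \<gamma> :: "'n mindex" assume \<gamma>: "\<gamma> \<in> mindices d"
      have "\<xi> \<gamma> = (\<Sum>i\<in>{0..<card F}. u (en i) * en i \<gamma>)"
        using F(4) sum.reindex_bij_betw[OF en, of "\<lambda>v. u v * v \<gamma>"] by simp
      also have "\<dots> = (\<Sum>i\<in>{0..<card F}. c i * mono (ys i) \<gamma>)"
      proof (intro sum.cong refl)
        fix i assume "i \<in> {0..<card F}"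
        then have "en i = delta d (ys i)" "c i = u (en i)" using pt enF by (auto simp: ys_def c_def)
        then show "u (en i) * en i \<gamma> = c i * mono (ys i) \<gamma>" using \<gamma> by (simp add: delta_def)
      qed
      also have "\<dots> = (\<Sum>i\<le>N. c i * mono (ys i) \<gamma>)"
        using card_F by (intro sum.mono_neutral_left) (auto simp: c_def)
      finally show "\<xi> \<gamma> = (\<Sum>i\<le>N. c i * mono (ys i) \<gamma>)" .
    qed
    ultimately show ?thesis by (rule that)
  qed
qed

lemma separates_polys_delta_image:
  fixes X :: "(real^'n::finite) set"
  assumes "Hdeg X \<ge> enat (d + 1)"
  shows "separates_polys d (delta d ` X)"
  unfolding separates_polys_def
proof (intro allI impI)
  fix c assume "\<forall>\<zeta>\<in>delta d ` X. dapply d \<zeta> c = 0"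
  then have vanish: "\<forall>x\<in>X. (\<Sum>\<alpha>\<in>mindices d. c \<alpha> * mono x \<alpha>) = 0" by (simp add: dapply_delta)
  define p where "p \<alpha> = (if \<alpha> \<in> mindices d then c \<alpha> else 0)" for \<alpha> :: "'n mindex"
  have supp: "{\<alpha>. p \<alpha> \<noteq> 0} \<subseteq> mindices d" by (auto simp: p_def)
  have peval_p: "peval p x = (\<Sum>\<alpha>\<in>mindices d. c \<alpha> * mono x \<alpha>)" for x
  proof -
    have "peval p x = (\<Sum>\<alpha>\<in>mindices d. p \<alpha> * mono x \<alpha>)"
      unfolding peval_def using supp finite_mindices by (intro sum.mono_neutral_left) auto
    then show ?thesis by (simp add: p_def)
  qed
  have "pdeg p \<le> d"
    unfolding pdeg_def using supp finite_subset[OF supp finite_mindices]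
    by (subst Max_le_iff) (auto simp: mindices_def)
  have "p = (\<lambda>_. 0)"
  proof (rule ccontr)
    assume "p \<noteq> (\<lambda>_. 0)"
    moreover have "is_poly p" unfolding is_poly_def using finite_subset[OF supp finite_mindices] .
    ultimately have "Hdeg X \<le> enat (pdeg p)"
      unfolding Hdeg_def using vanish peval_p by (intro INF_lower) auto
    also have "\<dots> \<le> enat d" using \<open>pdeg p \<le> d\<close> by simp
    finally have "Hdeg X \<le> enat d" .
    with assms have "enat (d + 1) \<le> enat d" by (rule order.trans)
    then show False by simp
  qed
  show "\<forall>\<alpha>\<in>mindices d. c \<alpha> = 0"
  proof
    fix \<alpha> :: "'n mindex" assume "\<alpha> \<in> mindices d"
    then show "c \<alpha> = 0" using fun_cong[OF \<open>p = (\<lambda>_. 0)\<close>, of \<alpha>] by (simp add: p_def)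
  qed
qed

lemma separates_polys_delta_affine_image:
  fixes X :: "(real^'n::finite) set" and A :: "real^'n^'n"
  assumes "invertible A" "separates_polys d (delta d ` X)"
  shows "separates_polys d (delta d ` (\<lambda>x. A *v (x - y0)) ` X)"
  unfolding separates_polys_def
proof (intro allI impI)
  fix c assume "\<forall>\<zeta>\<in>delta d ` (\<lambda>x. A *v (x - y0)) ` X. dapply d \<zeta> c = 0"
  then have vanish: "\<forall>x\<in>X. (\<Sum>\<alpha>\<in>mindices d. c \<alpha> * mono (A *v (x - y0)) \<alpha>) = 0"
    by (simp add: dapply_delta)
  obtain A' where A': "A ** A' = mat 1" using assms(1) unfolding invertible_def by blast
  have "polyfun d (\<lambda>x. (\<lambda>z::real^'n. \<Sum>\<alpha>\<in>mindices d. c \<alpha> * mono z \<alpha>) (- (A *v y0) + A *v x))"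
    by (rule polyfun_affine_comp) (auto simp: polyfun_def)
  then obtain e where e: "\<And>x. (\<Sum>\<alpha>\<in>mindices d. c \<alpha> * mono (A *v (x - y0)) \<alpha>) = (\<Sum>\<alpha>\<in>mindices d. e \<alpha> * mono x \<alpha>)"
    unfolding polyfun_def by (auto simp: matrix_vector_mult_diff_distrib)
  have "\<forall>\<alpha>\<in>mindices d. e \<alpha> = 0"
    using assms(2) vanish unfolding separates_polys_def by (simp add: dapply_delta e)
  then have "(\<Sum>\<alpha>\<in>mindices d. c \<alpha> * mono z \<alpha>) = 0" for z :: "real^'n"
    using e[of "A' *v z + y0"] by (simp add: matrix_vector_mul_assoc A')
  then show "\<forall>\<alpha>\<in>mindices d. c \<alpha> = 0" by (rule mono_coeffs_eq_0)
qed

section \<open>The bundles \<open>E\<^sub>k\<close>\<close>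

lemma DeltaE_mono: "E \<subseteq> E' \<Longrightarrow> DeltaE X d N E \<subseteq> DeltaE X d N E'"
  unfolding DeltaE_def fibre_def by blast

lemma Eprime_mono: "E \<subseteq> E' \<Longrightarrow> Eprime X d N E \<subseteq> Eprime X d N E'"
  unfolding Eprime_def using closure_mono[OF DeltaE_mono] by blast

lemma fspan_mono: "S \<subseteq> T \<Longrightarrow> fspan S \<subseteq> fspan T"
  unfolding fspan_def by blast

lemma fspan_subset_dual_space: "S \<subseteq> dual_space d \<Longrightarrow> fspan S \<subseteq> dual_space d"
  unfolding fspan_def dual_space_def by (force intro!: sum.neutral)

lemma delta_mem_Eprime:
  fixes a :: "real^'n::finite"
  assumes aX: "a \<in> X" and E0: "Eseq X d N 0 \<subseteq> E"
  shows "(a, delta d a) \<in> Eprime X d N E"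
proof -
  have "(a, (\<lambda>\<alpha>. t * delta d a \<alpha>)) \<in> E" for t using aX E0 by auto
  from this[of 1] this[of 0] have f1: "delta d a \<in> fibre E a" and f0: "(\<lambda>_. 0) \<in> fibre E a"
    by (simp_all add: fibre_def)
  define as where "as = (\<lambda>i. if i \<le> N then a else (0::real^'n))"
  define \<xi>s where "\<xi>s = (\<lambda>i::nat. if i = 0 then delta d a else (\<lambda>_. 0::real))"
  have "(as, delta d a) \<in> DeltaE X d N E"
    unfolding DeltaE_def
  proof (intro CollectI exI conjI allI impI ballI)
    fix i assume i: "i \<le> N"
    show "as i \<in> X" using aX i by (simp add: as_def)
    show "\<xi>s i \<in> fibre E (as i)" using f0 f1 i by (simp add: as_def \<xi>s_def)
    fix \<alpha> :: "'n mindex" assume "\<alpha> \<in> mindices d"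
    then have "\<bar>dapply d (\<xi>s i) (shifted_mono (as i) \<alpha>)\<bar> \<le> 1"
      by (cases "i = 0") (simp add: \<xi>s_def as_def dapply_delta_shifted_mono, simp add: \<xi>s_def dapply_def)
    then show "norm (as i - as 0) ^ (d - mdeg \<alpha>) * \<bar>dapply d (\<xi>s i) (shifted_mono (as i) \<alpha>)\<bar> \<le> 1"
      using i by (simp add: as_def power_0_left)
  next
    show "delta d a = (\<lambda>\<alpha>. \<Sum>i\<le>N. \<xi>s i \<alpha>)"
    proof
      fix \<alpha>
      have "(\<Sum>i\<le>N. \<xi>s i \<alpha>) = (\<Sum>i\<le>N. if i = 0 then delta d a \<alpha> else 0)"
        by (intro sum.cong) (auto simp: \<xi>s_def)
      then show "delta d a \<alpha> = (\<Sum>i\<le>N. \<xi>s i \<alpha>)" by simp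
    qed
  qed (simp_all add: as_def)
  then show ?thesis
    unfolding Eprime_def as_def using aX closure_subset by blast
qed

lemma Eseq_0_subset: "Eseq X d N 0 \<subseteq> Eseq X d N k"
proof (induction k)
  case (Suc k)
  show ?case
  proof
    fix p assume "p \<in> Eseq X d N 0"
    then obtain a t where p: "p = (a, (\<lambda>\<alpha>. t * delta d a \<alpha>))" "a \<in> X" by auto
    have "delta d a \<in> fibre (Eprime X d N (Eseq X d N k)) a"
      using delta_mem_Eprime[OF p(2) Suc.IH] by (simp add: fibre_def)
    then have "(\<lambda>\<alpha>. t * delta d a \<alpha>) \<in> fspan (fibre (Eprime X d N (Eseq X d N k)) a)"
      unfolding fspan_def by (intro CollectI exI[of _ "{delta d a}"] exI[of _ "\<lambda>_. t"]) auto
    then show "p \<in> Eseq X d N (Suc k)" using p by simp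
  qed
qed simp

lemma closed_snd_dual_space:
  "closed {p :: ('x::topological_space) \<times> ('b::finite mindex \<Rightarrow> real). snd p \<in> dual_space d}"
proof -
  have "{p :: 'x \<times> ('b mindex \<Rightarrow> real). snd p \<in> dual_space d} = (\<Inter>\<alpha>\<in>-mindices d. {p. snd p \<alpha> = 0})"
    by (auto simp: dual_space_def)
  moreover have "closed {p :: 'x \<times> ('b mindex \<Rightarrow> real). snd p \<alpha> = 0}" for \<alpha>
    by (intro closed_Collect_eq continuous_on_const
        continuous_on_compose2[OF continuous_on_product_coordinates continuous_on_snd]) auto
  ultimately show ?thesis by auto
qed

lemma fibre_Eprime_subset_dual_space:
  assumes "\<And>a \<xi>. (a, \<xi>) \<in> E \<Longrightarrow> \<xi> \<in> dual_space d"
  shows "fibre (Eprime X d N E) a \<subseteq> dual_space d"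
proof -
  have "DeltaE X d N E \<subseteq> {p. snd p \<in> dual_space d}"
  proof
    fix p assume "p \<in> DeltaE X d N E"
    then obtain as \<xi>s where p: "p = (as, (\<lambda>\<alpha>. \<Sum>i\<le>N. \<xi>s i \<alpha>))" "\<forall>i\<le>N. \<xi>s i \<in> fibre E (as i)"
      unfolding DeltaE_def by blast
    then have "\<forall>i\<le>N. \<xi>s i \<in> dual_space d" using assms by (auto simp: fibre_def)
    then show "p \<in> {p. snd p \<in> dual_space d}" using p by (auto simp: dual_space_def)
  qed
  then have "closure (DeltaE X d N E) \<subseteq> {p. snd p \<in> dual_space d}"
    by (rule closure_minimal[OF _ closed_snd_dual_space])
  then show ?thesis unfolding fibre_def Eprime_def by auto
qed

lemma Eseq_snd_in_dual_space: "(a, \<xi>) \<in> Eseq X d N k \<Longrightarrow> \<xi> \<in> dual_space d"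
proof (induction k arbitrary: a \<xi>)
  case 0
  then show ?case by (auto simp: dual_space_def delta_def)
next
  case (Suc k)
  then have "fibre (Eprime X d N (Eseq X d N k)) a \<subseteq> dual_space d"
    by (intro fibre_Eprime_subset_dual_space) blast
  then show ?case using Suc.prems fspan_subset_dual_space by auto
qed

section \<open>Translated functionals\<close>

text \<open>\<open>shifted_mono (- s) \<alpha>\<close> lists the coefficients of \<open>h \<mapsto> (s + h)\<^sup>\<alpha>\<close>, so
  \<open>poly_translate d s p\<close> is the coefficient vector of \<open>h \<mapsto> p (s + h)\<close> and \<open>shift_dual d s w\<close>
  is the functional \<open>p \<mapsto> w (p (s + \<cdot>))\<close>.\<close>

definition poly_translate :: "nat \<Rightarrow> real^'n::finite \<Rightarrow> ('n mindex \<Rightarrow> real) \<Rightarrow> 'n mindex \<Rightarrow> real" where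
  "poly_translate d s p \<gamma> = (\<Sum>\<alpha>\<in>mindices d. p \<alpha> * shifted_mono (- s) \<alpha> \<gamma>)"

definition shift_dual :: "nat \<Rightarrow> real^'n::finite \<Rightarrow> ('n mindex \<Rightarrow> real) \<Rightarrow> 'n mindex \<Rightarrow> real" where
  "shift_dual d s w \<alpha> =
     (if \<alpha> \<in> mindices d then \<Sum>\<gamma>\<in>mindices d. shifted_mono (- s) \<alpha> \<gamma> * w \<gamma> else 0)"

lemma mono_add_expansion:
  assumes "\<alpha> \<in> mindices d"
  shows "mono (s + h) \<alpha> = (\<Sum>\<gamma>\<in>mindices d. shifted_mono (- s) \<alpha> \<gamma> * mono h \<gamma>)"
  using mono_diff_expansion[OF assms, of h "- s"] by (simp add: add.commute)

lemma poly_translate_eval: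
  "(\<Sum>\<gamma>\<in>mindices d. poly_translate d s p \<gamma> * mono h \<gamma>) = (\<Sum>\<alpha>\<in>mindices d. p \<alpha> * mono (s + h) \<alpha>)"
proof -
  have "(\<Sum>\<gamma>\<in>mindices d. poly_translate d s p \<gamma> * mono h \<gamma>)
      = (\<Sum>\<alpha>\<in>mindices d. p \<alpha> * (\<Sum>\<gamma>\<in>mindices d. shifted_mono (- s) \<alpha> \<gamma> * mono h \<gamma>))"
    unfolding poly_translate_def sum_distrib_left sum_distrib_right
    by (subst sum.swap) (simp add: mult.assoc)
  also have "\<dots> = (\<Sum>\<alpha>\<in>mindices d. p \<alpha> * mono (s + h) \<alpha>)"
    by (intro sum.cong refl) (simp add: mono_add_expansion)
  finally show ?thesis .
qed

lemma poly_translate_eq_0_imp: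
  fixes s :: "real^'n::finite"
  assumes "\<forall>\<gamma>\<in>mindices d. poly_translate d s p \<gamma> = 0"
  shows "\<forall>\<alpha>\<in>mindices d. p \<alpha> = 0"
proof (rule mono_coeffs_eq_0)
  fix x :: "real^'n"
  have "(\<Sum>\<alpha>\<in>mindices d. p \<alpha> * mono x \<alpha>) = (\<Sum>\<gamma>\<in>mindices d. poly_translate d s p \<gamma> * mono (x - s) \<gamma>)"
    unfolding poly_translate_eval by simp
  then show "(\<Sum>\<alpha>\<in>mindices d. p \<alpha> * mono x \<alpha>) = 0" using assms by simp
qed

lemma dapply_shift_dual: "dapply d (shift_dual d s w) p = dapply d w (poly_translate d s p)"
  unfolding dapply_def shift_dual_def poly_translate_def sum_distrib_left sum_distrib_right
  by (subst sum.swap) (intro sum.cong refl, simp add: sum_distrib_left mult_ac)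

lemma sum_deltas_annihilates_low_degree:
  assumes w: "\<forall>\<beta>\<in>mindices d. w \<beta> = (\<Sum>i\<le>N. c i * mono (z i) \<beta>)"
    and low: "\<forall>\<beta>\<in>mindices d. mdeg \<beta> < m \<longrightarrow> w \<beta> = 0"
    and f: "polyfun j f" and "j < m" "m \<le> d"
  shows "(\<Sum>i\<le>N. c i * f (z i)) = 0"
proof -
  obtain e where e: "\<And>x. f x = (\<Sum>\<beta>\<in>mindices j. e \<beta> * mono x \<beta>)"
    using f unfolding polyfun_def by blast
  have sub: "mindices j \<subseteq> mindices d" using \<open>j < m\<close> \<open>m \<le> d\<close> by (intro mindices_mono) simp
  have "(\<Sum>i\<le>N. c i * f (z i)) = (\<Sum>\<beta>\<in>mindices j. e \<beta> * (\<Sum>i\<le>N. c i * mono (z i) \<beta>))"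
    unfolding e sum_distrib_left by (subst sum.swap) (simp add: algebra_simps)
  also have "\<dots> = (\<Sum>\<beta>\<in>mindices j. e \<beta> * w \<beta>)"
    using w sub by (intro sum.cong refl) auto
  also have "\<dots> = 0"
    using low sub \<open>j < m\<close> by (intro sum.neutral) (auto simp: mindices_def)
  finally show ?thesis .
qed

section \<open>Limits of rescaled point evaluations\<close>

lemma tendsto_fun_componentwise:
  fixes f :: "'a \<Rightarrow> 'b \<Rightarrow> 'c::topological_space"
  assumes "\<And>i. ((\<lambda>c. f c i) \<longlongrightarrow> l i) F"
  shows "(f \<longlongrightarrow> l) F"
proof -
  have "limitin (product_topology (\<lambda>_. euclidean) UNIV) f l F"
    using assms by (simp add: limitin_componentwise)
  then show ?thesis by (metis euclidean_product_topology limitin_canonical_iff)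
qed

text \<open>The weights \<open>c i / r\<^sup>m\<close> may be large, but the side condition of \<open>\<Delta>E\<^sub>0\<close> only sees
  \<open>\<bar>a\<^sub>i - a\<^sub>0\<bar>\<^sup>d \<bar>c\<^sub>i\<bar> / r\<^sup>m = r\<^sup>d\<^sup>-\<^sup>m \<bar>x\<^sub>i - x\<^sub>0\<bar>\<^sup>d \<bar>c\<^sub>i\<bar>\<close>.\<close>

lemma rescaled_deltas_mem_DeltaE:
  fixes T :: "real^'n::finite \<Rightarrow> real^'n"
  assumes r: "0 < r" "r \<le> 1" and X_inv: "\<forall>x\<in>X. s + r *\<^sub>R T x \<in> X"
    and iso: "\<forall>x x'. norm (T x - T x') = norm (x - x')"
    and xsX: "\<forall>i\<le>N. xs i \<in> X" and bound: "\<forall>i\<le>N. norm (xs i - xs 0) ^ d * \<bar>c i\<bar> \<le> 1"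
    and "m \<le> d"
  shows "((\<lambda>i. if i \<le> N then s + r *\<^sub>R T (xs i) else 0),
          (\<lambda>\<alpha>. \<Sum>i\<le>N. c i / r ^ m * delta d (s + r *\<^sub>R T (xs i)) \<alpha>)) \<in> DeltaE X d N (Eseq X d N 0)"
proof -
  define a where "a i = (if i \<le> N then s + r *\<^sub>R T (xs i) else 0)" for i
  define \<xi>s where "\<xi>s i = (\<lambda>\<alpha>. c i / r ^ m * delta d (s + r *\<^sub>R T (xs i)) \<alpha>)" for i
  define \<xi> where "\<xi> = (\<lambda>\<alpha>. \<Sum>i\<le>N. \<xi>s i \<alpha>)"
  have "(a, \<xi>) \<in> DeltaE X d N (Eseq X d N 0)"
    unfolding DeltaE_def
  proof (intro CollectI exI conjI allI impI ballI)
    show "(a, \<xi>) = (a, \<xi>)" ..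
    fix i assume i: "i \<le> N"
    then have a_i: "a i = s + r *\<^sub>R T (xs i)" by (simp add: a_def)
    show aX: "a i \<in> X" using X_inv xsX i by (simp add: a_i)
    then show "\<xi>s i \<in> fibre (Eseq X d N 0) (a i)"
      by (simp only: a_i fibre_def \<xi>s_def Eseq.simps mem_Collect_eq case_prod_conv) blast
    fix \<alpha> :: "'n mindex" assume \<alpha>: "\<alpha> \<in> mindices d"
    have dapply_\<xi>s: "dapply d (\<xi>s i) (shifted_mono (a i) \<alpha>) = c i / r ^ m * (if \<alpha> = (\<lambda>_. 0) then 1 else 0)"
      by (simp only: a_i \<xi>s_def dapply_scale dapply_delta_shifted_mono[OF \<alpha>])
    show "norm (a i - a 0) ^ (d - mdeg \<alpha>) * \<bar>dapply d (\<xi>s i) (shifted_mono (a i) \<alpha>)\<bar> \<le> 1"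
    proof (cases "\<alpha> = (\<lambda>_. 0)")
      case True
      have "norm (a i - a 0) = r * norm (xs i - xs 0)"
      proof -
        have "a i - a 0 = r *\<^sub>R (T (xs i) - T (xs 0))" using i by (simp add: a_def algebra_simps)
        then show ?thesis using iso r by simp
      qed
      then have "norm (a i - a 0) ^ (d - mdeg \<alpha>) * \<bar>dapply d (\<xi>s i) (shifted_mono (a i) \<alpha>)\<bar>
          = (r * norm (xs i - xs 0)) ^ d * (\<bar>c i\<bar> / r ^ m)"
        unfolding dapply_\<xi>s using True r by (simp add: mdeg_def abs_mult)
      also have "\<dots> = r ^ (d - m) * (norm (xs i - xs 0) ^ d * \<bar>c i\<bar>)"
      proof -
        have "r ^ d = r ^ (d - m) * r ^ m" using \<open>m \<le> d\<close> by (simp flip: power_add)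
        then show ?thesis using r by (simp add: power_mult_distrib field_simps)
      qed
      also have "\<dots> \<le> 1 * 1"
        using bound i r by (intro mult_mono power_le_one) auto
      finally show ?thesis by simp
    qed (simp add: dapply_\<xi>s)
  qed (simp_all add: a_def \<xi>_def)
  then show ?thesis unfolding a_def \<xi>_def \<xi>s_def .
qed

lemma rescaled_deltas_expansion:
  assumes "\<alpha> \<in> mindices d"
  shows "(\<Sum>i\<le>N. c i / r ^ m * delta d (s + r *\<^sub>R z i) \<alpha>)
    = (\<Sum>\<gamma>\<in>mindices d. shifted_mono (- s) \<alpha> \<gamma> * (r ^ mdeg \<gamma> / r ^ m * (\<Sum>i\<le>N. c i * mono (z i) \<gamma>)))"
proof -
  have "(\<Sum>i\<le>N. c i / r ^ m * delta d (s + r *\<^sub>R z i) \<alpha>)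
      = (\<Sum>i\<le>N. c i / r ^ m * (\<Sum>\<gamma>\<in>mindices d. shifted_mono (- s) \<alpha> \<gamma> * (r ^ mdeg \<gamma> * mono (z i) \<gamma>)))"
    using assms by (simp add: delta_def mono_add_expansion mono_scaleR)
  also have "\<dots> = (\<Sum>\<gamma>\<in>mindices d. shifted_mono (- s) \<alpha> \<gamma> * (r ^ mdeg \<gamma> / r ^ m * (\<Sum>i\<le>N. c i * mono (z i) \<gamma>)))"
    unfolding sum_distrib_left by (subst sum.swap) (intro sum.cong refl, simp add: field_simps)
  finally show ?thesis .
qed

lemma rescaled_deltas_tendsto:
  fixes I :: "nat \<Rightarrow> real^'n::finite \<Rightarrow> real^'n"
  assumes \<rho>: "\<forall>k. 0 < \<rho> k" "\<rho> \<longlonglongrightarrow> 0" and I_lim: "\<forall>x. (\<lambda>k. I k x) \<longlonglongrightarrow> J x"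
    and low: "\<forall>k \<gamma>. mdeg \<gamma> < m \<longrightarrow> (\<Sum>i\<le>N. c i * mono (I k (xs i)) \<gamma>) = 0"
    and w: "\<forall>\<gamma>\<in>mindices d. w \<gamma> = (\<Sum>i\<le>N. c i * mono (J (xs i)) \<gamma>)"
    and hom: "\<forall>\<gamma>\<in>mindices d. mdeg \<gamma> \<noteq> m \<longrightarrow> w \<gamma> = 0"
  shows "(\<lambda>k \<alpha>. \<Sum>i\<le>N. c i / \<rho> k ^ m * delta d (s + \<rho> k *\<^sub>R I k (xs i)) \<alpha>)
           \<longlonglongrightarrow> shift_dual d s w"
proof (rule tendsto_fun_componentwise)
  fix \<alpha> :: "'n mindex"
  define \<Lambda> where "\<Lambda> k \<gamma> = (\<Sum>i\<le>N. c i * mono (I k (xs i)) \<gamma>)" for k \<gamma>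
  define g where "g k \<gamma> = (if mdeg \<gamma> < m then 0 else \<rho> k ^ (mdeg \<gamma> - m) * \<Lambda> k \<gamma>)" for k \<gamma>
  show "(\<lambda>k. \<Sum>i\<le>N. c i / \<rho> k ^ m * delta d (s + \<rho> k *\<^sub>R I k (xs i)) \<alpha>) \<longlonglongrightarrow> shift_dual d s w \<alpha>"
  proof (cases "\<alpha> \<in> mindices d")
    case False
    then show ?thesis by (simp add: delta_def shift_dual_def)
  next
    case \<alpha>: True
    have expand: "(\<Sum>i\<le>N. c i / \<rho> k ^ m * delta d (s + \<rho> k *\<^sub>R I k (xs i)) \<alpha>)
        = (\<Sum>\<gamma>\<in>mindices d. shifted_mono (- s) \<alpha> \<gamma> * g k \<gamma>)" for k
      unfolding rescaled_deltas_expansion[OF \<alpha>] \<Lambda>_def[symmetric]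
    proof (intro sum.cong refl)
      fix \<gamma> :: "'n mindex"
      show "shifted_mono (- s) \<alpha> \<gamma> * (\<rho> k ^ mdeg \<gamma> / \<rho> k ^ m * \<Lambda> k \<gamma>) = shifted_mono (- s) \<alpha> \<gamma> * g k \<gamma>"
      proof (cases "mdeg \<gamma> < m")
        case False
        then have "\<rho> k ^ mdeg \<gamma> = \<rho> k ^ (mdeg \<gamma> - m) * \<rho> k ^ m" by (simp flip: power_add)
        then show ?thesis using False \<rho>(1)[rule_format, of k] by (simp add: g_def)
      qed (use low in \<open>simp add: g_def \<Lambda>_def\<close>)
    qed
    have "(\<lambda>k. g k \<gamma>) \<longlonglongrightarrow> w \<gamma>" if "\<gamma> \<in> mindices d" for \<gamma>
    proof -
      have "(\<lambda>k. \<Lambda> k \<gamma>) \<longlonglongrightarrow> w \<gamma>"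
        unfolding \<Lambda>_def using w that I_lim by (auto intro!: tendsto_sum tendsto_mult mono_tendsto)
      then have lim: "(\<lambda>k. \<rho> k ^ (mdeg \<gamma> - m) * \<Lambda> k \<gamma>) \<longlonglongrightarrow> 0 ^ (mdeg \<gamma> - m) * w \<gamma>"
        by (intro tendsto_mult tendsto_power \<rho>(2))
      show ?thesis
      proof (cases "mdeg \<gamma> < m")
        case False
        then show ?thesis using lim hom that by (cases "mdeg \<gamma> = m") (simp_all add: g_def)
      qed (use hom that in \<open>simp add: g_def\<close>)
    qed
    then have "(\<lambda>k. \<Sum>\<gamma>\<in>mindices d. shifted_mono (- s) \<alpha> \<gamma> * g k \<gamma>)
        \<longlonglongrightarrow> (\<Sum>\<gamma>\<in>mindices d. shifted_mono (- s) \<alpha> \<gamma> * w \<gamma>)"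
      by (intro tendsto_sum tendsto_mult tendsto_const)
    moreover have "shift_dual d s w \<alpha> = (\<Sum>\<gamma>\<in>mindices d. shifted_mono (- s) \<alpha> \<gamma> * w \<gamma>)"
      using \<alpha> by (simp add: shift_dual_def)
    ultimately show ?thesis by (simp only: expand)
  qed
qed

lemma rescaled_deltas_limit_mem_Eprime:
  fixes I :: "nat \<Rightarrow> real^'n::finite \<Rightarrow> real^'n"
  assumes "s \<in> X"
    and \<rho>: "\<forall>k. 0 < \<rho> k \<and> \<rho> k \<le> 1" "\<rho> \<longlonglongrightarrow> 0"
    and X_inv: "\<forall>k. \<forall>x\<in>X. s + \<rho> k *\<^sub>R I k x \<in> X"
    and iso: "\<forall>k x x'. norm (I k x - I k x') = norm (x - x')"
    and I_lim: "\<forall>x. (\<lambda>k. I k x) \<longlonglongrightarrow> J x"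
    and xsX: "\<forall>i\<le>N. xs i \<in> X" and bound: "\<forall>i\<le>N. norm (xs i - xs 0) ^ d * \<bar>c i\<bar> \<le> 1"
    and "m \<le> d"
    and low: "\<forall>k \<gamma>. mdeg \<gamma> < m \<longrightarrow> (\<Sum>i\<le>N. c i * mono (I k (xs i)) \<gamma>) = 0"
    and w: "\<forall>\<gamma>\<in>mindices d. w \<gamma> = (\<Sum>i\<le>N. c i * mono (J (xs i)) \<gamma>)"
    and hom: "\<forall>\<gamma>\<in>mindices d. mdeg \<gamma> \<noteq> m \<longrightarrow> w \<gamma> = 0"
  shows "(s, shift_dual d s w) \<in> Eprime X d N (Eseq X d N 0)"
proof -
  define a where "a k i = (if i \<le> N then s + \<rho> k *\<^sub>R I k (xs i) else 0)" for k i
  define \<xi> where "\<xi> k = (\<lambda>\<alpha>. \<Sum>i\<le>N. c i / \<rho> k ^ m * delta d (s + \<rho> k *\<^sub>R I k (xs i)) \<alpha>)" for k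
  have "(a k, \<xi> k) \<in> DeltaE X d N (Eseq X d N 0)" for k
    unfolding a_def \<xi>_def using \<rho>(1) X_inv iso xsX bound \<open>m \<le> d\<close>
    by (intro rescaled_deltas_mem_DeltaE) auto
  moreover have "a \<longlonglongrightarrow> (\<lambda>i. if i \<le> N then s else 0)"
  proof (rule tendsto_fun_componentwise)
    fix i
    have "(\<lambda>k. s + \<rho> k *\<^sub>R I k (xs i)) \<longlonglongrightarrow> s + 0 *\<^sub>R J (xs i)"
      using \<rho>(2) I_lim by (intro tendsto_intros) auto
    then show "(\<lambda>k. a k i) \<longlonglongrightarrow> (if i \<le> N then s else 0)" by (simp add: a_def)
  qed
  moreover have "\<xi> \<longlonglongrightarrow> shift_dual d s w"
    unfolding \<xi>_def using \<rho> I_lim low w hom by (intro rescaled_deltas_tendsto) auto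
  ultimately have "((\<lambda>i. if i \<le> N then s else 0), shift_dual d s w) \<in> closure (DeltaE X d N (Eseq X d N 0))"
    unfolding closure_sequential by (intro exI[of _ "\<lambda>k. (a k, \<xi> k)"]) (auto intro: tendsto_Pair)
  then show ?thesis unfolding Eprime_def using \<open>s \<in> X\<close> by simp
qed

section \<open>Blowing up a self-similar set at one of its points\<close>

lemma similarity_comp:
  "similarity \<psi> a \<Longrightarrow> similarity \<phi> b \<Longrightarrow> similarity (\<psi> \<circ> \<phi>) (a * b)"
  unfolding similarity_def by auto

lemma similarity_id: "similarity (\<lambda>x. x) 1"
  unfolding similarity_def by auto

lemma similarity_decomp:
  fixes \<psi> :: "real^'n::finite \<Rightarrow> real^'n"
  assumes "similarity \<psi> \<rho>"
  shows "orthogonal_transformation (\<lambda>x. (1 / \<rho>) *\<^sub>R (\<psi> x - \<psi> 0))"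
    and "\<psi> x = \<psi> 0 + \<rho> *\<^sub>R ((1 / \<rho>) *\<^sub>R (\<psi> x - \<psi> 0))"
proof -
  have "0 < \<rho>" and dist: "\<And>x y. dist (\<psi> x) (\<psi> y) = \<rho> * dist x y"
    using assms unfolding similarity_def by auto
  then show "\<psi> x = \<psi> 0 + \<rho> *\<^sub>R ((1 / \<rho>) *\<^sub>R (\<psi> x - \<psi> 0))" by simp
  have "dist ((1 / \<rho>) *\<^sub>R (\<psi> x - \<psi> 0)) ((1 / \<rho>) *\<^sub>R (\<psi> y - \<psi> 0)) = dist x y" for x y
  proof -
    have "dist ((1 / \<rho>) *\<^sub>R (\<psi> x - \<psi> 0)) ((1 / \<rho>) *\<^sub>R (\<psi> y - \<psi> 0)) = (1 / \<rho>) * dist (\<psi> x) (\<psi> y)"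
      using \<open>0 < \<rho>\<close> by (simp add: dist_norm flip: scaleR_diff_right)
    then show ?thesis using \<open>0 < \<rho>\<close> dist by simp
  qed
  then show "orthogonal_transformation (\<lambda>x. (1 / \<rho>) *\<^sub>R (\<psi> x - \<psi> 0))"
    unfolding orthogonal_transformation_isometry by simp
qed

text \<open>Composing the defining maps along a path of length \<open>k\<close> that keeps \<open>s\<close> in the image
  gives a self-map of \<open>X\<close> with ratio at most \<open>R\<^sup>k\<close>, where \<open>R < 1\<close> is the largest ratio.\<close>

lemma self_similar_iterates:
  fixes X :: "(real^'n::finite) set"
  assumes "self_similar X" "s \<in> X"
  obtains R where "0 < R" "R < 1"
    "\<forall>k. \<exists>\<psi> \<rho>. similarity \<psi> \<rho> \<and> \<rho> \<le> R ^ k \<and> \<psi> ` X \<subseteq> X \<and> s \<in> \<psi> ` X"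
proof -
  obtain p :: nat and \<phi> :: "nat \<Rightarrow> real^'n \<Rightarrow> real^'n" where "p \<ge> 2"
    and sim: "\<forall>i<p. \<exists>r. r < 1 \<and> similarity (\<phi> i) r" and X: "X = (\<Union>i<p. \<phi> i ` X)"
    using assms(1) unfolding self_similar_def by blast
  have X_covered: "X \<subseteq> (\<Union>i<p. \<phi> i ` X)" and \<phi>_X: "\<And>i. i < p \<Longrightarrow> \<phi> i ` X \<subseteq> X"
    using equalityD1[OF X] equalityD2[OF X] by auto
  obtain r where r: "\<And>i. i < p \<Longrightarrow> r i < 1 \<and> similarity (\<phi> i) (r i)"
    using sim by metis
  define R where "R = Max (r ` {..<p})"
  have R_ge: "i < p \<Longrightarrow> r i \<le> R" for i unfolding R_def by (rule Max_ge) auto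
  have "0 < R" using R_ge[of 0] r[of 0] \<open>p \<ge> 2\<close> by (auto simp: similarity_def)
  moreover have "R < 1" unfolding R_def using r \<open>p \<ge> 2\<close> by (subst Max_less_iff) (auto simp: lessThan_empty_iff)
  moreover have "\<exists>\<psi> \<rho>. similarity \<psi> \<rho> \<and> \<rho> \<le> R ^ k \<and> \<psi> ` X \<subseteq> X \<and> s \<in> \<psi> ` X" for k
  proof (induction k)
    case 0
    show ?case using similarity_id assms(2) by (intro exI[of _ "\<lambda>x. x"] exI[of _ 1]) auto
  next
    case (Suc k)
    then obtain \<psi> \<rho> where \<psi>: "similarity \<psi> \<rho>" "\<rho> \<le> R ^ k" "\<psi> ` X \<subseteq> X" "s \<in> \<psi> ` X"
      by blast
    then obtain x i where x: "s = \<psi> x" "i < p" "x \<in> \<phi> i ` X" using X_covered by blast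
    have "similarity (\<psi> \<circ> \<phi> i) (\<rho> * r i)" using similarity_comp[OF \<psi>(1)] r[OF x(2)] by blast
    moreover have "\<rho> * r i \<le> R ^ Suc k"
    proof -
      have "0 \<le> r i" using r[OF x(2)] by (simp add: similarity_def)
      then have "\<rho> * r i \<le> R ^ k * R"
        using \<psi>(2) R_ge[OF x(2)] \<open>0 < R\<close> by (intro mult_mono) auto
      then show ?thesis by (simp add: mult.commute)
    qed
    moreover have "(\<psi> \<circ> \<phi> i) ` X \<subseteq> X"
      using image_mono[OF \<phi>_X[OF x(2)], of \<psi>] \<psi>(3) by (simp add: image_comp)
    moreover have "s \<in> (\<psi> \<circ> \<phi> i) ` X" using x by auto
    ultimately show ?case by blast
  qed
  ultimately show ?thesis using that by blast
qed

lemma self_similar_zoom: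
  fixes X :: "(real^'n::finite) set"
  assumes "self_similar X" "s \<in> X"
  obtains \<rho> Q y where "\<forall>k. 0 < \<rho> k \<and> \<rho> k \<le> 1 \<and> orthogonal_transformation (Q k) \<and> y k \<in> X \<and>
      (\<forall>x\<in>X. s + \<rho> k *\<^sub>R Q k (x - y k) \<in> X)"
    "\<rho> \<longlonglongrightarrow> 0"
proof -
  obtain R where R: "0 < R" "R < 1"
    and "\<forall>k. \<exists>\<psi> \<rho>. similarity \<psi> \<rho> \<and> \<rho> \<le> R ^ k \<and> \<psi> ` X \<subseteq> X \<and> s \<in> \<psi> ` X"
    by (rule self_similar_iterates[OF assms])
  then have "\<forall>k. \<exists>\<psi> \<rho> y. similarity \<psi> \<rho> \<and> \<rho> \<le> R ^ k \<and> \<psi> ` X \<subseteq> X \<and> y \<in> X \<and> \<psi> y = s"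
    by (metis imageE)
  then obtain \<psi> \<rho> y where \<psi>: "\<forall>k. similarity (\<psi> k) (\<rho> k) \<and> \<rho> k \<le> R ^ k \<and> \<psi> k ` X \<subseteq> X \<and>
      y k \<in> X \<and> \<psi> k (y k) = s"
    by metis
  define Q where "Q k x = (1 / \<rho> k) *\<^sub>R (\<psi> k x - \<psi> k 0)" for k x
  have Q: "orthogonal_transformation (Q k)" and \<psi>_Q: "\<And>x. \<psi> k x = \<psi> k 0 + \<rho> k *\<^sub>R Q k x" for k
    using similarity_decomp \<psi> unfolding Q_def[abs_def] by blast+
  have "s + \<rho> k *\<^sub>R Q k (x - y k) = \<psi> k x" for k x
  proof -
    have "s = \<psi> k 0 + \<rho> k *\<^sub>R Q k (y k)" using \<psi>_Q[of k "y k"] \<psi> by simp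
    moreover have "Q k (x - y k) = Q k x - Q k (y k)"
      by (rule linear_diff[OF orthogonal_transformation_linear[OF Q]])
    ultimately show ?thesis using \<psi>_Q[of k x] by (simp add: scaleR_diff_right)
  qed
  then have X_inv: "\<forall>x\<in>X. s + \<rho> k *\<^sub>R Q k (x - y k) \<in> X" for k
    using \<psi> by (simp add: image_subset_iff)
  have "0 < \<rho> k" for k using \<psi> by (simp add: similarity_def)
  moreover have "\<rho> k \<le> 1" for k
    using \<psi> R by (meson less_imp_le order_trans power_le_one)
  ultimately have "\<forall>k. 0 < \<rho> k \<and> \<rho> k \<le> 1 \<and> orthogonal_transformation (Q k) \<and> y k \<in> X \<and>
      (\<forall>x\<in>X. s + \<rho> k *\<^sub>R Q k (x - y k) \<in> X)"
    using Q X_inv \<psi> by blast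
  moreover have "\<rho> \<longlonglongrightarrow> 0"
  proof (rule tendsto_sandwich[of "\<lambda>_. 0" _ _ "\<lambda>k. R ^ k"])
    show "\<forall>\<^sub>F k in sequentially. 0 \<le> \<rho> k" using \<psi> by (auto simp: similarity_def less_imp_le)
    show "\<forall>\<^sub>F k in sequentially. \<rho> k \<le> R ^ k" using \<psi> by simp
    show "(\<lambda>k. R ^ k) \<longlonglongrightarrow> 0" using R by (intro LIMSEQ_realpow_zero) auto
  qed simp
  ultimately show ?thesis by (rule that)
qed

lemma tendsto_matrix_vector_mult:
  fixes M :: "nat \<Rightarrow> real^'n::finite^'m::finite"
  assumes "M \<longlonglongrightarrow> A" "v \<longlonglongrightarrow> x"
  shows "(\<lambda>k. M k *v v k) \<longlonglongrightarrow> A *v x"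
proof (rule vec_tendstoI)
  fix i
  have "(\<lambda>k. \<Sum>j\<in>UNIV. M k $ i $ j * v k $ j) \<longlonglongrightarrow> (\<Sum>j\<in>UNIV. A $ i $ j * x $ j)"
    by (intro tendsto_sum tendsto_mult tendsto_vec_nth assms)
  then show "(\<lambda>k. (M k *v v k) $ i) \<longlonglongrightarrow> (A *v x) $ i"
    by (simp add: matrix_vector_mult_def)
qed

lemma norm_matrix_orthogonal_transformation_le:
  fixes Q :: "real^'n::finite \<Rightarrow> real^'n"
  assumes "orthogonal_transformation Q"
  shows "norm (matrix Q) \<le> real CARD('n) * real CARD('n)"
proof -
  have "\<bar>matrix Q $ i $ j\<bar> \<le> 1" for i j
  proof -
    have "\<bar>matrix Q $ i $ j\<bar> = \<bar>Q (axis j 1) $ i\<bar>" by (simp add: matrix_def)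
    also have "\<dots> \<le> norm (Q (axis j 1))" by (rule component_le_norm_cart)
    also have "\<dots> = 1" using assms by (simp add: orthogonal_transformation)
    finally show ?thesis .
  qed
  then have "norm (matrix Q $ i) \<le> real CARD('n)" for i
    using norm_le_l1_cart[of "matrix Q $ i"] sum_mono[of UNIV "\<lambda>j. \<bar>matrix Q $ i $ j\<bar>" "\<lambda>_. 1"]
    by simp
  then have "(\<Sum>i\<in>UNIV. norm (matrix Q $ i)) \<le> real CARD('n) * real CARD('n)"
    using sum_mono[of UNIV "\<lambda>i. norm (matrix Q $ i)" "\<lambda>_. real CARD('n)"] by simp
  moreover have "norm (matrix Q) \<le> (\<Sum>i\<in>UNIV. norm (matrix Q $ i))"
    unfolding norm_vec_def by (rule L2_set_le_sum) simp
  ultimately show ?thesis by linarith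
qed

lemma orthogonal_transformations_convergent_subseq:
  fixes Q :: "nat \<Rightarrow> real^'n::finite \<Rightarrow> real^'n"
  assumes Q: "\<And>k. orthogonal_transformation (Q k)" and "bounded (range y)"
  obtains r A y0 where "strict_mono r" "\<And>x. (\<lambda>k. Q (r k) (x - y (r k))) \<longlonglongrightarrow> A *v (x - y0)"
    "orthogonal_matrix A"
proof -
  have "bounded (range (\<lambda>k. matrix (Q k)))"
    unfolding bounded_iff using norm_matrix_orthogonal_transformation_le[OF Q] by blast
  then have "bounded (range (\<lambda>k. (matrix (Q k), y k)))"
    by (rule bounded_subset[OF bounded_Times[OF _ \<open>bounded (range y)\<close>]]) auto
  then obtain l r where r: "strict_mono r" and lim: "((\<lambda>k. (matrix (Q k), y k)) \<circ> r) \<longlonglongrightarrow> l"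
    using bounded_imp_convergent_subsequence by blast
  define A where "A = fst l"
  define y0 where "y0 = snd l"
  have MA: "(\<lambda>k. matrix (Q (r k))) \<longlonglongrightarrow> A" and yy: "(\<lambda>k. y (r k)) \<longlonglongrightarrow> y0"
    using tendsto_fst[OF lim] tendsto_snd[OF lim] unfolding A_def y0_def o_def by simp_all
  have Qm: "Q k x = matrix (Q k) *v x" for k x
    using fun_cong[OF matrix_vector_mul(2)[OF orthogonal_transformation_linear[OF Q[of k]]], of x] by simp
  have lim_x: "(\<lambda>k. Q (r k) (x - y (r k))) \<longlonglongrightarrow> A *v (x - y0)" for x
  proof -
    have "(\<lambda>k. matrix (Q (r k)) *v (x - y (r k))) \<longlonglongrightarrow> A *v (x - y0)"
      by (intro tendsto_matrix_vector_mult MA tendsto_diff tendsto_const yy)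
    moreover have "(\<lambda>k. Q (r k) (x - y (r k))) = (\<lambda>k. matrix (Q (r k)) *v (x - y (r k)))"
      by (intro ext Qm)
    ultimately show ?thesis by simp
  qed
  have "norm (A *v v) = norm v" for v
  proof -
    have "(\<lambda>k. norm (matrix (Q (r k)) *v v)) \<longlonglongrightarrow> norm (A *v v)"
      by (intro tendsto_norm tendsto_matrix_vector_mult MA tendsto_const)
    moreover have "(\<lambda>k. norm (Q (r k) v)) = (\<lambda>k. norm (matrix (Q (r k)) *v v))"
      by (intro ext arg_cong[where f = norm] Qm)
    ultimately have "(\<lambda>k. norm (Q (r k) v)) \<longlonglongrightarrow> norm (A *v v)" by simp
    moreover have "norm (Q (r k) v) = norm v" for k
      using Q by (simp add: orthogonal_transformation)
    ultimately show ?thesis by (simp add: LIMSEQ_const_iff)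
  qed
  then have "orthogonal_matrix A"
    using orthogonal_transformation_matrix[of "(*v) A"] by (simp add: orthogonal_transformation)
  then show ?thesis using that r lim_x by blast
qed

lemma self_similar_blowup:
  fixes X :: "(real^'n::finite) set"
  assumes "self_similar X" "s \<in> X"
  obtains \<rho> :: "nat \<Rightarrow> real" and I :: "nat \<Rightarrow> real^'n \<Rightarrow> real^'n" and A :: "real^'n^'n" and y0
  where "\<forall>k. 0 < \<rho> k \<and> \<rho> k \<le> 1" "\<rho> \<longlonglongrightarrow> 0"
    "\<forall>k. \<forall>x\<in>X. s + \<rho> k *\<^sub>R I k x \<in> X"
    "\<forall>k x x'. norm (I k x - I k x') = norm (x - x')"
    "\<forall>k. \<exists>b L. linear L \<and> (\<forall>x. I k x = b + L x)"
    "\<forall>x. (\<lambda>k. I k x) \<longlonglongrightarrow> A *v (x - y0)"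
    "invertible A"
proof -
  obtain \<rho> Q y where zoom: "\<forall>k. 0 < \<rho> k \<and> \<rho> k \<le> 1 \<and> orthogonal_transformation (Q k) \<and> y k \<in> X \<and>
      (\<forall>x\<in>X. s + \<rho> k *\<^sub>R Q k (x - y k) \<in> X)"
    and "\<rho> \<longlonglongrightarrow> 0"
    by (rule self_similar_zoom[OF assms])
  then have Q: "orthogonal_transformation (Q k)" for k by blast
  have "bounded X" using assms(1) unfolding self_similar_def by (auto intro: compact_imp_bounded)
  moreover have "range y \<subseteq> X" using zoom by auto
  ultimately have "bounded (range y)" by (rule bounded_subset)
  show ?thesis
  proof (rule orthogonal_transformations_convergent_subseq[OF Q \<open>bounded (range y)\<close>])
    fix r A y0 assume r: "strict_mono r" and lim: "\<And>x. (\<lambda>k. Q (r k) (x - y (r k))) \<longlonglongrightarrow> A *v (x - y0)"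
      and "orthogonal_matrix A"
    define I where "I k x = Q (r k) (x - y (r k))" for k x
    have lin: "linear (Q k)" for k using Q by (rule orthogonal_transformation_linear)
    show ?thesis
    proof (rule that[of "\<rho> \<circ> r" I A y0])
      show "\<forall>k. 0 < (\<rho> \<circ> r) k \<and> (\<rho> \<circ> r) k \<le> 1" using zoom by simp
      show "(\<rho> \<circ> r) \<longlonglongrightarrow> 0" using LIMSEQ_subseq_LIMSEQ[OF \<open>\<rho> \<longlonglongrightarrow> 0\<close> r] .
      show "\<forall>k. \<forall>x\<in>X. s + (\<rho> \<circ> r) k *\<^sub>R I k x \<in> X" using zoom by (simp add: I_def)
      show "\<forall>k x x'. norm (I k x - I k x') = norm (x - x')"
        using Q by (simp add: I_def orthogonal_transformation flip: linear_diff[OF lin])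
      have "I k x = - Q (r k) (y (r k)) + Q (r k) x" for k x by (simp add: I_def linear_diff[OF lin])
      then show "\<forall>k. \<exists>b L. linear L \<and> (\<forall>x. I k x = b + L x)" using lin by blast
      show "\<forall>x. (\<lambda>k. I k x) \<longlonglongrightarrow> A *v (x - y0)" using lim by (simp add: I_def)
      show "invertible A" using \<open>orthogonal_matrix A\<close> unfolding orthogonal_matrix_def invertible_def by blast
    qed
  qed
qed

section \<open>The fibre of \<open>E\<^sub>1\<close>\<close>

lemma exists_scale_le_1:
  fixes a c :: "nat \<Rightarrow> real"
  assumes "\<forall>i\<le>N. 0 \<le> a i"
  shows "\<exists>t>0. \<forall>i\<le>N. a i * \<bar>t * c i\<bar> \<le> 1"
proof -
  define S where "S = (\<Sum>i\<le>N. a i * \<bar>c i\<bar>)"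
  have "S \<ge> 0" unfolding S_def using assms by (intro sum_nonneg) auto
  have "a i * \<bar>c i / (1 + S)\<bar> \<le> 1" if "i \<le> N" for i
  proof -
    have "a i * \<bar>c i\<bar> \<le> 1 + S"
      unfolding S_def using assms that by (intro add_increasing member_le_sum) auto
    then show ?thesis using \<open>S \<ge> 0\<close> by (simp add: abs_mult field_simps)
  qed
  then show ?thesis using \<open>S \<ge> 0\<close> by (intro exI[of _ "1 / (1 + S)"]) auto
qed

lemma mono_affine_factors_through:
  fixes A :: "real^'n::finite^'n" and L :: "real^'n \<Rightarrow> real^'n"
  assumes "linear L" "invertible A"
  shows "\<exists>f. polyfun (mdeg \<gamma>) f \<and> (\<forall>x. mono (b + L x) \<gamma> = f (A *v (x - y0)))"
proof -
  obtain A' where "A' ** A = mat 1" using assms(2) unfolding invertible_def by blast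
  then have "b + L x = (b + L y0) + (L \<circ> (*v) A') (A *v (x - y0))" for x
    using assms(1) by (simp add: matrix_vector_mul_assoc linear_diff flip: linear_add)
  then have "mono (b + L x) \<gamma> = mono ((b + L y0) + (L \<circ> (*v) A') (A *v (x - y0))) \<gamma>" for x
    by (rule arg_cong)
  moreover have "polyfun (mdeg \<gamma>) (\<lambda>z. mono ((b + L y0) + (L \<circ> (*v) A') z) \<gamma>)"
    using assms(1) by (intro polyfun_affine_comp polyfun_mono linear_compose) auto
  ultimately show ?thesis by blast
qed

lemma homogeneous_shift_dual_mem_Eprime:
  fixes X :: "(real^'n::finite) set"
  assumes card: "card (mindices d :: 'n mindex set) \<le> N + 1" and "self_similar X"
    and "Hdeg X \<ge> enat (d + 1)" and "s \<in> X"
    and "w \<in> dual_space d" and hom: "\<forall>\<gamma>. mdeg \<gamma> \<noteq> m \<longrightarrow> w \<gamma> = 0" and "m \<le> d"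
  shows "\<exists>t>0. (s, shift_dual d s (\<lambda>\<gamma>. t * w \<gamma>)) \<in> Eprime X d N (Eseq X d N 0)"
proof -
  obtain \<rho> I A y0 where \<rho>: "\<forall>k. 0 < \<rho> k \<and> \<rho> k \<le> 1" "\<rho> \<longlonglongrightarrow> 0"
    and X_inv: "\<forall>k. \<forall>x\<in>X. s + \<rho> k *\<^sub>R I k x \<in> X"
    and iso: "\<forall>k x x'. norm (I k x - I k x') = norm (x - x')"
    and affine: "\<forall>k. \<exists>b L. linear L \<and> (\<forall>x. I k x = b + L x)"
    and I_lim: "\<forall>x. (\<lambda>k. I k x) \<longlonglongrightarrow> A *v (x - y0)" and "invertible A"
    by (rule self_similar_blowup[OF \<open>self_similar X\<close> \<open>s \<in> X\<close>])
  define J where "J x = A *v (x - y0)" for x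
  have "separates_polys d (delta d ` J ` X)"
    unfolding J_def[abs_def]
    by (intro separates_polys_delta_affine_image \<open>invertible A\<close> separates_polys_delta_image assms(3))
  then obtain ys c0 where ys: "\<forall>i\<le>N. ys i \<in> J ` X"
    and w_c0: "\<forall>\<gamma>\<in>mindices d. w \<gamma> = (\<Sum>i\<le>N. c0 i * mono (ys i) \<gamma>)"
    by (rule dual_space_eq_sum_deltas[OF _ imageI[OF \<open>s \<in> X\<close>] card \<open>w \<in> dual_space d\<close>])
  have "\<forall>i. \<exists>x. i \<le> N \<longrightarrow> x \<in> X \<and> ys i = J x" using ys by blast
  then obtain xs where xs: "\<forall>i\<le>N. xs i \<in> X \<and> ys i = J (xs i)" by (rule choice[THEN exE]) blast
  obtain t where "t > 0" and bound: "\<forall>i\<le>N. norm (xs i - xs 0) ^ d * \<bar>t * c0 i\<bar> \<le> 1"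
    using exists_scale_le_1[of N "\<lambda>i. norm (xs i - xs 0) ^ d" c0] by auto
  define c where "c i = t * c0 i" for i
  have w_c: "\<forall>\<gamma>\<in>mindices d. t * w \<gamma> = (\<Sum>i\<le>N. c i * mono (J (xs i)) \<gamma>)"
    using w_c0 xs by (simp add: c_def sum_distrib_left mult.assoc)
  have low: "\<forall>k \<gamma>. mdeg \<gamma> < m \<longrightarrow> (\<Sum>i\<le>N. c i * mono (I k (xs i)) \<gamma>) = 0"
  proof (intro allI impI)
    fix k and \<gamma> :: "'n mindex" assume "mdeg \<gamma> < m"
    obtain b L where "linear L" and I_k: "\<And>x. I k x = b + L x" using affine by blast
    then obtain f where "polyfun (mdeg \<gamma>) f" and f: "\<forall>x. mono (I k x) \<gamma> = f (J x)"
      using mono_affine_factors_through[OF _ \<open>invertible A\<close>] unfolding J_def by metis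
    then have "(\<Sum>i\<le>N. c i * f (J (xs i))) = 0"
      using w_c hom \<open>mdeg \<gamma> < m\<close> \<open>m \<le> d\<close>
      by (intro sum_deltas_annihilates_low_degree[where w = "\<lambda>\<gamma>. t * w \<gamma>"]) auto
    then show "(\<Sum>i\<le>N. c i * mono (I k (xs i)) \<gamma>) = 0" using f by simp
  qed
  have "(s, shift_dual d s (\<lambda>\<gamma>. t * w \<gamma>)) \<in> Eprime X d N (Eseq X d N 0)"
    using \<rho> X_inv iso I_lim xs bound low w_c hom \<open>m \<le> d\<close> \<open>s \<in> X\<close>
    by (intro rescaled_deltas_limit_mem_Eprime[where J = J]) (auto simp: J_def c_def)
  then show ?thesis using \<open>t > 0\<close> by blast
qed

text \<open>For \<open>p \<noteq> 0\<close> let \<open>w\<close> be a nonzero homogeneous part of \<open>p (s + \<cdot>)\<close>, read as a functional.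
  A positive multiple of \<open>f \<mapsto> w (f (s + \<cdot>))\<close> lies in the fibre, and it pairs with \<open>p\<close> to a
  positive multiple of \<open>\<Sum> w\<^sub>\<gamma>\<^sup>2\<close>.\<close>

lemma fibre_Eprime_separates_polys:
  fixes X :: "(real^'n::finite) set"
  assumes "card (mindices d :: 'n mindex set) \<le> N + 1" "self_similar X"
    and "Hdeg X \<ge> enat (d + 1)" "s \<in> X"
  shows "separates_polys d (fibre (Eprime X d N (Eseq X d N 0)) s)"
  unfolding separates_polys_def
proof (intro allI impI)
  fix p assume orth: "\<forall>\<zeta>\<in>fibre (Eprime X d N (Eseq X d N 0)) s. dapply d \<zeta> p = 0"
  define q where "q = poly_translate d s p"
  show "\<forall>\<alpha>\<in>mindices d. p \<alpha> = 0"
  proof (rule poly_translate_eq_0_imp[of d s], rule ccontr)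
    assume "\<not> (\<forall>\<gamma>\<in>mindices d. poly_translate d s p \<gamma> = 0)"
    then obtain \<gamma>0 where \<gamma>0: "\<gamma>0 \<in> mindices d" "q \<gamma>0 \<noteq> 0" by (auto simp: q_def)
    define m where "m = mdeg \<gamma>0"
    define w where "w \<gamma> = (if \<gamma> \<in> mindices d \<and> mdeg \<gamma> = m then q \<gamma> else 0)" for \<gamma>
    have "m \<le> d" using \<gamma>0 by (simp add: m_def mindices_def)
    moreover have "w \<in> dual_space d" by (simp add: w_def dual_space_def)
    moreover have "\<forall>\<gamma>. mdeg \<gamma> \<noteq> m \<longrightarrow> w \<gamma> = 0" by (simp add: w_def)
    ultimately obtain t where "t > 0"
      and "(s, shift_dual d s (\<lambda>\<gamma>. t * w \<gamma>)) \<in> Eprime X d N (Eseq X d N 0)"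
      using homogeneous_shift_dual_mem_Eprime assms by blast
    then have "0 = dapply d (shift_dual d s (\<lambda>\<gamma>. t * w \<gamma>)) p"
      using orth by (simp add: fibre_def)
    also have "\<dots> = dapply d (\<lambda>\<gamma>. t * w \<gamma>) q"
      by (simp only: dapply_shift_dual q_def)
    also have "\<dots> = t * (\<Sum>\<gamma>\<in>mindices d. if mdeg \<gamma> = m then (q \<gamma>)\<^sup>2 else 0)"
      unfolding dapply_def sum_distrib_left
      by (intro sum.cong refl) (simp add: w_def power2_eq_square)
    also have "\<dots> > 0"
      using \<open>t > 0\<close> \<gamma>0 by (intro mult_pos_pos sum_pos2[OF finite_mindices \<gamma>0(1)]) (auto simp: m_def)
    finally show False by simp
  qed
qed

theorem theorem5p2:
  fixes X :: "(real^'n::finite) set" and d N :: nat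
  assumes "Ndim CARD('n) d = N + 1"
    and "self_similar X"
    and "Hdeg X \<ge> enat (d + 1)"
  shows "\<forall>s\<in>X. fibre (paratangent X d N) s = dual_space d"
proof
  fix s assume "s \<in> X"
  define k where "k = 2 * N + 1"
  have k: "paratangent X d N = Eseq X d N (Suc k)"
    using assms(1) by (simp add: paratangent_def k_def)
  have card: "card (mindices d :: 'n mindex set) \<le> N + 1"
    using card_mindices_le[where 'n='n and d=d] assms(1) by simp
  have "dual_space d \<subseteq> fspan (fibre (Eprime X d N (Eseq X d N 0)) s)"
    using fibre_Eprime_separates_polys[OF card assms(2,3) \<open>s \<in> X\<close>]
      fibre_Eprime_subset_dual_space[OF Eseq_snd_in_dual_space]
    by (rule dual_space_subset_fspan)
  also have "\<dots> \<subseteq> fspan (fibre (Eprime X d N (Eseq X d N k)) s)"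
    using Eprime_mono[OF Eseq_0_subset[of X d N k]] unfolding fibre_def by (intro fspan_mono) blast
  also have "\<dots> = fibre (paratangent X d N) s"
    using \<open>s \<in> X\<close> by (simp add: k fibre_def)
  finally have "dual_space d \<subseteq> fibre (paratangent X d N) s" .
  moreover have "fibre (paratangent X d N) s \<subseteq> dual_space d"
    using Eseq_snd_in_dual_space unfolding fibre_def paratangent_def by blast
  ultimately show "fibre (paratangent X d N) s = dual_space d" by (rule subset_antisym[rotated])
qed

end
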